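(* In the quantized jammed MIMO model described in the context, fix $H$, $J$, $N_0$, assume $w\sim\mathcal{CN}(0,\rho I_I)$, $n\sim\mathcal{CN}(0,N_0I_B)$, and that the entries $s_u$ of $s$ are uncorrelated (i.e. $\mathbb{E}[s_us_v^*]=0$ for $u\ne v$) with $\mathbb{E}[|s_u|^2]\le1$. Let the number of quantization levels $M=M(\rho)\ge2$ be a function of the jammer power $\rho$ (the quantizers and the distribution of $s$ may also depend on $\rho$). If all rows of $J$ are nonzero and $\lim_{\rho\to\infty}I(q;s)>0$, then $M\succeq\sqrt{\rho}$, i.e., it is not the case that there exists $\epsilon>0$ with $\lim_{\rho\to\infty}M(\rho)\,\rho^{\epsilon-1/2}=0$.
   Context: Let $B,U,I$ be positive integers, $H\in\mathbb{C}^{B\times U}$ and $J\in\mathbb{C}^{B\times I}$ fixed matrices, and $N_0>0$. Let $s\in\mathbb{C}^U$, $w\in\mathbb{C}^I$, $n\in\mathbb{C}^B$ be mutually independent random vectors and $y=Hs+Jw+n$. Let $\mathcal{C}=\{1,\dots,B\}\times\{\mathfrak{r},\mathfrak{i}\}$, and for $v\in\mathbb{C}^B$ write $v_{(b,\mathfrak{r})}=\mathrm{Re}(v_b)$, $v_{(b,\mathfrak{i})}=\mathrm{Im}(v_b)$. For each $c\in\mathcal{C}$, $Q_c:\mathbb{R}\to\mathfrak{Q}_c$ is a scalar quantizer with $M=|\mathfrak{Q}_c|\ge2$ levels (partitioning $\mathbb{R}$ into $M$ intervals, separated by at most $M-1$ boundary points, each mapped to a distinct level; possibly non-uniform and different for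 each $c$), and $q=(Q_c(y_c))_{c\in\mathcal{C}}$. For functions $f,g$, $f\prec g$ means there exists $\epsilon>0$ with $\lim_{x\to\infty}\frac{f(x)}{g(x)}x^{\epsilon}=0$, and $f\succeq g$ is its logical negation. *)

theory Defs
  imports "HOL-Probability.Probability"
begin

text \<open>Real / imaginary part selector for the index set C = {1..B} x {r,i}.\<close>
datatype reim = ReP | ImP

definition reim_comp :: "complex ^ 'b \<Rightarrow> 'b \<times> reim \<Rightarrow> real" where
  "reim_comp v c = (case snd c of ReP \<Rightarrow> Re (v $ fst c) | ImP \<Rightarrow> Im (v $ fst c))"

definition is_quantizer :: "(real \<Rightarrow> real) \<Rightarrow> nat \<Rightarrow> bool" where
  "is_quantizer Q m \<longleftrightarrow> finite (range Q) \<and> card (range Q) = m \<and>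
     (\<forall>v \<in> range Q. is_interval (Q -` {v}))"

text \<open>Density (w.r.t. Lebesgue measure on C^n = R^(2n)) of the circularly symmetric
  complex Gaussian CN(0, sigma2 I_n).\<close>
definition cn_density :: "real \<Rightarrow> complex ^ 'n \<Rightarrow> real" where
  "cn_density sigma2 x = exp (- (norm x)\<^sup>2 / sigma2) / (pi * sigma2) ^ CARD('n)"

definition rx_signal :: "complex ^ 'u ^ 'b \<Rightarrow> complex ^ 'i ^ 'b \<Rightarrow> complex ^ 'u \<Rightarrow> complex ^ 'i
    \<Rightarrow> complex ^ 'b \<Rightarrow> complex ^ 'b" where
  "rx_signal H J s w n = H *v s + J *v w + n"

definition quantize :: "('b \<times> reim \<Rightarrow> real \<Rightarrow> real) \<Rightarrow> complex ^ 'b \<Rightarrow> 'b \<times> reim \<Rightarrow> real" where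
  "quantize Q y = (\<lambda>c. Q c (reim_comp y c))"

definition indep_rv :: "'a measure \<Rightarrow> ('a \<Rightarrow> 'x::topological_space) \<Rightarrow> ('a \<Rightarrow> 'y::topological_space) \<Rightarrow> bool" where
  "indep_rv M X Y \<longleftrightarrow> X \<in> borel_measurable M \<and> Y \<in> borel_measurable M \<and>
     (\<forall>A \<in> sets borel. \<forall>B \<in> sets borel.
        measure M {\<omega> \<in> space M. X \<omega> \<in> A \<and> Y \<omega> \<in> B}
          = measure M {\<omega> \<in> space M. X \<omega> \<in> A} * measure M {\<omega> \<in> space M. Y \<omega> \<in> B})"

end

(* The jammer acts as Gaussian dither. Every real component of J w is a nondegenerate
   Gaussian of variance of order rho, so it lies within distance |delta| of one of the at
   most M thresholds of its quantizer with probability O(M |delta| / sqrt rho). Hence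
   changing the transmitted vector from 0 to sigma changes the output law only by
   O(M |H sigma| / sqrt rho) in total variation, and for s of bounded power the output law
   given s stays within O(M / sqrt rho) of the unconditional one on average. Writing
   I(q; s) = E [sum_x eta (p (x | s)) - eta (p x)] with eta t = t ln t, the modulus of
   continuity eta a - eta b <= tau - |a - b| ln tau gives, for every tau in (0, 1],
     I(q; s) ln 2 <= M^(2B) tau + ln (1 / tau) O(M / sqrt rho).
   With tau = rho^(-B) and M = O(rho^(1/2 - epsilon)) the right-hand side tends to 0,
   so the mutual information cannot have a positive limit. *)

theory Submission
  imports Defs "HOL-Real_Asymp.Real_Asymp"
begin

section \<open>Inequalities for \<open>x ln x\<close>\<close>

lemma xlnx_diff_le:
  fixes a b :: real
  assumes "0 \<le> a" "a \<le> b" "b \<le> 1"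
  shows "b * ln b - a * ln a \<le> b - a"
proof (cases "a = 0")
  case True
  have "b * ln b \<le> 0" using assms by (cases "b = 0") (auto simp: mult_nonneg_nonpos)
  then show ?thesis using True assms by simp
next
  case False
  then have a: "a > 0" and b: "b > 0" using assms by auto
  have "b * ln b - a * ln a = a * ln (b / a) + (b - a) * ln b"
    using a b by (simp add: ln_div algebra_simps)
  moreover have "a * ln (b / a) \<le> a * (b / a - 1)"
    using a b ln_le_minus_one[of "b / a"] by (intro mult_left_mono) auto
  moreover have "a * (b / a - 1) = b - a" using a by (simp add: field_simps)
  moreover have "(b - a) * ln b \<le> 0" using assms b by (intro mult_nonneg_nonpos) auto
  ultimately show ?thesis by linarith
qed

lemma xlnx_superadditive:
  fixes x y :: real
  assumes "0 \<le> x" "0 \<le> y"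
  shows "x * ln x + y * ln y \<le> (x + y) * ln (x + y)"
proof (cases "x = 0 \<or> y = 0")
  case False
  then have "x * ln x \<le> x * ln (x + y)" "y * ln y \<le> y * ln (x + y)"
    using assms by (auto intro!: mult_left_mono)
  then show ?thesis by (simp add: algebra_simps)
qed auto

lemma neg_xlnx_le_tangent:
  fixes d \<tau> :: real
  assumes "0 \<le> d" "0 < \<tau>"
  shows "- (d * ln d) \<le> \<tau> - d - d * ln \<tau>"
proof (cases "d = 0")
  case False
  then have d: "d > 0" using assms by auto
  have "d * ln (\<tau> / d) \<le> d * (\<tau> / d - 1)"
    using d assms ln_le_minus_one[of "\<tau> / d"] by (intro mult_left_mono) auto
  moreover have "d * (\<tau> / d - 1) = \<tau> - d" using d by (simp add: field_simps)
  ultimately show ?thesis using d assms by (simp add: ln_div algebra_simps)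
qed (use assms in auto)

text \<open>For \<open>\<tau> = \<bar>a - b\<bar>\<close> this is the usual modulus of continuity of \<open>x ln x\<close>; keeping \<open>\<tau>\<close>
  independent of \<open>a\<close> and \<open>b\<close> makes the bound linear in \<open>\<bar>a - b\<bar>\<close>, so that it can be
  integrated and summed.\<close>
lemma abs_xlnx_diff_le:
  fixes a b \<tau> :: real
  assumes "0 \<le> a" "a \<le> 1" "0 \<le> b" "b \<le> 1" "0 < \<tau>"
  shows "\<bar>a * ln a - b * ln b\<bar> \<le> \<tau> - \<bar>a - b\<bar> * ln \<tau>"
proof -
  have ordered: "\<bar>x * ln x - y * ln y\<bar> \<le> \<tau> - (y - x) * ln \<tau>"
    if "0 \<le> x" "x \<le> y" "y \<le> 1" for x y
  proof -
    have "(y - x) * (1 + ln \<tau>) \<le> \<tau>"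
    proof (cases "1 + ln \<tau> \<le> 0")
      case False
      then have "(y - x) * (1 + ln \<tau>) \<le> 1 * (1 + ln \<tau>)" using that by (intro mult_right_mono) auto
      then show ?thesis using ln_le_minus_one[of \<tau>] assms by simp
    qed (use that assms mult_nonneg_nonpos[of "y - x" "1 + ln \<tau>"] in linarith)
    moreover have "x * ln x - y * ln y \<le> - ((y - x) * ln (y - x))"
      using xlnx_superadditive[of x "y - x"] that by simp
    ultimately show ?thesis
      using xlnx_diff_le[of x y] neg_xlnx_le_tangent[of "y - x" \<tau>] that assms
      by (simp add: algebra_simps)
  qed
  show ?thesis
  proof (cases "a \<le> b")
    case True then show ?thesis using ordered[of a b] assms by simp
  next
    case False then show ?thesis using ordered[of b a] assms by (simp add: abs_minus_commute)
  qed
qed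

lemma abs_xlnx_le:
  fixes t :: real
  assumes "0 \<le> t"
  shows "\<bar>t * ln t\<bar> \<le> t\<^sup>2 + 1"
proof (cases "t \<ge> 1")
  case True
  have "t * ln t \<le> t * (t - 1)" using True ln_le_minus_one[of t] by (intro mult_left_mono) auto
  then show ?thesis using True by (simp add: power2_eq_square algebra_simps)
next
  case False
  have "- (t * ln t) \<le> 1 - t" using neg_xlnx_le_tangent[of t 1] assms by simp
  moreover have "t * ln t \<le> 0" using False assms by (cases "t = 0") (auto simp: mult_nonneg_nonpos)
  ultimately show ?thesis using assms zero_le_power2[of t] unfolding abs_le_iff by linarith
qed

section \<open>Scalar quantizers\<close>

lemma quantizer_borel_measurable:
  assumes "is_quantizer Q m"
  shows "Q \<in> borel_measurable borel"
proof (rule borel_measurableI)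
  fix S :: "real set"
  have "finite (range Q)" and "\<And>v. v \<in> range Q \<Longrightarrow> is_interval (Q -` {v})"
    using assms unfolding is_quantizer_def by auto
  then have "(\<Union>v\<in>range Q \<inter> S. Q -` {v}) \<in> sets borel"
    by (intro sets.finite_UN) (auto intro: real_interval_borel_measurable)
  moreover have "Q -` S = (\<Union>v\<in>range Q \<inter> S. Q -` {v})" by auto
  ultimately show "Q -` S \<inter> space borel \<in> sets borel" by simp
qed

lemma quantizer_jump_near_cell_Sup:
  fixes Q :: "real \<Rightarrow> real"
  assumes "is_quantizer Q m" "\<delta> > 0" "Q (t + \<delta>) \<noteq> Q t"
  shows "\<bar>t - Sup (Q -` {Q t})\<bar> \<le> \<delta>"
proof -
  let ?I = "Q -` {Q t}"
  have iv: "is_interval ?I" using assms(1) unfolding is_quantizer_def by auto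
  have t: "t \<in> ?I" by simp
  have below: "y < t + \<delta>" if "y \<in> ?I" for y
  proof (rule ccontr)
    assume "\<not> y < t + \<delta>"
    then have "t \<le> t + \<delta>" "t + \<delta> \<le> y" using assms(2) by auto
    then have "t + \<delta> \<in> ?I" using iv t that unfolding is_interval_1 by blast
    then show False using assms(3) by simp
  qed
  have "bdd_above ?I" using below by (meson bdd_above.I less_eq_real_def)
  then have "t \<le> Sup ?I" using t by (rule cSup_upper[rotated])
  moreover have "Sup ?I \<le> t + \<delta>" using t below by (intro cSup_least) (auto intro: less_imp_le)
  ultimately show ?thesis by simp
qed

lemma quantizer_thresholds:
  fixes Q :: "real \<Rightarrow> real"
  assumes "is_quantizer Q m"
  obtains T where "finite T" "card T \<le> m"
    "\<And>t \<delta>. Q (t + \<delta>) \<noteq> Q t \<Longrightarrow> \<exists>e\<in>T. \<bar>t - e\<bar> \<le> 2 * \<bar>\<delta>\<bar>"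
proof
  define T where "T = (\<lambda>v. Sup (Q -` {v})) ` range Q"
  have fin: "finite (range Q)" "card (range Q) = m" using assms unfolding is_quantizer_def by auto
  show "finite T" unfolding T_def using fin by simp
  show "card T \<le> m" unfolding T_def using fin card_image_le by metis
  fix t \<delta> assume jump: "Q (t + \<delta>) \<noteq> Q t"
  show "\<exists>e\<in>T. \<bar>t - e\<bar> \<le> 2 * \<bar>\<delta>\<bar>"
  proof (cases "\<delta> > 0")
    case True
    then show ?thesis using quantizer_jump_near_cell_Sup[OF assms True jump]
      unfolding T_def by (intro bexI[of _ "Sup (Q -` {Q t})"]) auto
  next
    case False
    then have \<delta>: "\<delta> < 0" using jump by (cases "\<delta> = 0") auto
    have "Q ((t + \<delta>) + - \<delta>) \<noteq> Q (t + \<delta>)" using jump by simp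
    from quantizer_jump_near_cell_Sup[OF assms _ this] \<delta>
    have "\<bar>t - Sup (Q -` {Q (t + \<delta>)})\<bar> \<le> 2 * \<bar>\<delta>\<bar>" by simp
    then show ?thesis unfolding T_def by (intro bexI[of _ "Sup (Q -` {Q (t + \<delta>)})"]) auto
  qed
qed

section \<open>Gaussian mass of slabs\<close>

lemma cn_density_borel_measurable[measurable]:
  "(\<lambda>x. cn_density \<sigma> (x :: complex ^ 'n)) \<in> borel_measurable borel"
  unfolding cn_density_def by measurable

lemma cn_density_nonneg: "\<sigma> > 0 \<Longrightarrow> cn_density \<sigma> x \<ge> 0"
  unfolding cn_density_def by simp

lemma cn_density_add_ge:
  fixes c y :: "complex ^ 'n"
  assumes "\<rho> > 0" "(norm (c + y))\<^sup>2 \<le> (norm y)\<^sup>2 + D"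
  shows "exp (- D / \<rho>) * cn_density \<rho> y \<le> cn_density \<rho> (c + y)"
proof -
  have "(norm (c + y))\<^sup>2 / \<rho> \<le> ((norm y)\<^sup>2 + D) / \<rho>"
    using assms by (simp add: divide_right_mono)
  then have "- D / \<rho> + - (norm y)\<^sup>2 / \<rho> \<le> - (norm (c + y))\<^sup>2 / \<rho>"
    by (simp add: add_divide_distrib)
  then have "exp (- D / \<rho>) * exp (- (norm y)\<^sup>2 / \<rho>) \<le> exp (- (norm (c + y))\<^sup>2 / \<rho>)"
    by (simp only: exp_add[symmetric] exp_le_cancel_iff)
  then have "exp (- D / \<rho>) * exp (- (norm y)\<^sup>2 / \<rho>) / (pi * \<rho>) ^ CARD('n)
      \<le> exp (- (norm (c + y))\<^sup>2 / \<rho>) / (pi * \<rho>) ^ CARD('n)"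
    using assms(1) by (intro divide_right_mono) auto
  then show ?thesis unfolding cn_density_def by (simp only: times_divide_eq_right)
qed

lemma nn_integral_lborel_translate:
  fixes c :: "'a::euclidean_space"
  assumes [measurable]: "g \<in> borel_measurable borel"
  shows "(\<integral>\<^sup>+x. g x \<partial>lborel) = (\<integral>\<^sup>+y. g (c + y) \<partial>lborel)"
proof -
  have "(\<integral>\<^sup>+x. g x \<partial>lborel) = (\<integral>\<^sup>+x. g x \<partial>distr lborel borel ((+) c))"
    by (simp add: lborel_distr_plus)
  also have "\<dots> = (\<integral>\<^sup>+y. g (c + y) \<partial>lborel)"
    by (subst nn_integral_distr) auto
  finally show ?thesis .
qed

lemma emeasure_density_translate_ge:
  fixes f :: "'a::euclidean_space \<Rightarrow> real"
  assumes [measurable]: "f \<in> borel_measurable borel" "A \<in> sets borel"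
    and f_nonneg: "\<And>x. f x \<ge> 0" and "E \<ge> 0" and ratio: "\<And>y. y \<in> A \<Longrightarrow> E * f y \<le> f (c + y)"
  shows "ennreal E * emeasure (density lborel f) A \<le> emeasure (density lborel f) {x. x - c \<in> A}"
proof -
  have restricted_f: "(\<lambda>y. ennreal (f y) * indicator A y) \<in> borel_measurable lborel" by measurable
  have "emeasure (density lborel f) {x. x - c \<in> A} = (\<integral>\<^sup>+x. ennreal (f x) * indicator {x. x - c \<in> A} x \<partial>lborel)"
    by (subst emeasure_density) auto
  also have "\<dots> = (\<integral>\<^sup>+y. ennreal (f (c + y)) * indicator {x. x - c \<in> A} (c + y) \<partial>lborel)"
    by (rule nn_integral_lborel_translate) measurable
  also have "\<dots> = (\<integral>\<^sup>+y. ennreal (f (c + y)) * indicator A y \<partial>lborel)"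
    by (intro nn_integral_cong) (simp add: indicator_def)
  also have "\<dots> \<ge> (\<integral>\<^sup>+y. ennreal E * (ennreal (f y) * indicator A y) \<partial>lborel)"
  proof (intro nn_integral_mono)
    fix y
    show "ennreal E * (ennreal (f y) * indicator A y) \<le> ennreal (f (c + y)) * indicator A y"
      using f_nonneg[of y] ratio[of y] \<open>E \<ge> 0\<close>
      by (cases "y \<in> A") (simp_all add: ennreal_leI flip: ennreal_mult)
  qed
  also have "(\<integral>\<^sup>+y. ennreal E * (ennreal (f y) * indicator A y) \<partial>lborel) = ennreal E * emeasure (density lborel f) A"
    using nn_integral_cmult[OF restricted_f] by (simp add: emeasure_density)
  finally show ?thesis .
qed

lemma norm_scaleR_add_power2:
  fixes v y :: "'a::real_inner"
  shows "(norm (\<alpha> *\<^sub>R v + y))\<^sup>2 = (norm y)\<^sup>2 + 2 * \<alpha> * inner v y + \<alpha>\<^sup>2 * (norm v)\<^sup>2"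
  unfolding power2_norm_eq_inner
  by (simp add: inner_add_left inner_add_right inner_commute algebra_simps power2_eq_square)

lemma slab_shift_exponent_le:
  fixes a t ell nv :: real and k N :: nat
  assumes "nv > 0" "ell > 0" "a \<le> t" "t \<le> a + ell" "k < N"
  defines "\<alpha> \<equiv> real k * ((if a \<ge> 0 then -1 else 1) * 2 * ell / nv)"
  shows "2 * \<alpha> * t + \<alpha>\<^sup>2 * nv \<le> 4 * real N ^ 2 * ell\<^sup>2 / nv"
proof -
  have square: "\<alpha>\<^sup>2 * nv = 4 * real k ^ 2 * ell\<^sup>2 / nv"
    unfolding \<alpha>_def using assms(1) by (simp add: field_simps power2_eq_square)
  have cross: "2 * \<alpha> * t \<le> 4 * real k * ell\<^sup>2 / nv"
  proof (cases "a \<ge> 0")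
    case True
    then have "2 * \<alpha> * t \<le> 0"
      unfolding \<alpha>_def using assms(1-3) by (simp add: mult_nonneg_nonneg divide_nonneg_pos)
    moreover have "0 \<le> 4 * real k * ell\<^sup>2 / nv" using assms(1) by simp
    ultimately show ?thesis by linarith
  next
    case False
    then have "2 * \<alpha> * t \<le> 2 * \<alpha> * ell"
      unfolding \<alpha>_def using assms(1,2,4) by (intro mult_left_mono) auto
    also have "2 * \<alpha> * ell = 4 * real k * ell\<^sup>2 / nv"
      unfolding \<alpha>_def using False by (simp add: field_simps power2_eq_square)
    finally show ?thesis .
  qed
  have "real k + real k ^ 2 \<le> (real k + 1) ^ 2" by (simp add: power2_eq_square algebra_simps)
  also have "\<dots> \<le> real N ^ 2" using assms(5) by (intro power_mono) auto
  finally have "4 * (real k + real k ^ 2) * ell\<^sup>2 / nv \<le> 4 * real N ^ 2 * ell\<^sup>2 / nv"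
    using assms(1) by (intro divide_right_mono mult_right_mono mult_left_mono) auto
  then show ?thesis using square cross by (simp add: add_divide_distrib algebra_simps)
qed

lemma disjoint_family_slab_translates:
  fixes v :: "'a::real_inner"
  assumes "ell > 0" "\<bar>t\<bar> * (norm v)\<^sup>2 = 2 * ell"
  shows "disjoint_family_on (\<lambda>k::nat. {x. x - (real k * t) *\<^sub>R v \<in> {y. a \<le> inner v y \<and> inner v y \<le> a + ell}}) K"
proof (unfold disjoint_family_on_def, intro ballI impI)
  fix k k' :: nat assume "k \<noteq> k'"
  then have "1 * (2 * ell) \<le> \<bar>real k - real k'\<bar> * (2 * ell)" using assms(1) by (intro mult_right_mono) auto
  have shift: "inner v (x - (real j * t) *\<^sub>R v) = inner v x - real j * (t * (norm v)\<^sup>2)" for x j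
    by (simp add: inner_diff_right power2_norm_eq_inner)
  have distance: "\<bar>real k * (t * (norm v)\<^sup>2) - real k' * (t * (norm v)\<^sup>2)\<bar> = \<bar>real k - real k'\<bar> * (2 * ell)"
    using assms(2) by (simp add: abs_mult flip: left_diff_distrib mult.assoc)
  show "{x. x - (real k * t) *\<^sub>R v \<in> {y. a \<le> inner v y \<and> inner v y \<le> a + ell}}
      \<inter> {x. x - (real k' * t) *\<^sub>R v \<in> {y. a \<le> inner v y \<and> inner v y \<le> a + ell}} = {}"
    (is "?A \<inter> ?B = {}")
  proof (rule ccontr)
    assume "?A \<inter> ?B \<noteq> {}"
    then obtain x where "x - (real k * t) *\<^sub>R v \<in> {y. a \<le> inner v y \<and> inner v y \<le> a + ell}"
      "x - (real k' * t) *\<^sub>R v \<in> {y. a \<le> inner v y \<and> inner v y \<le> a + ell}" by blast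
    then have "\<bar>real k * (t * (norm v)\<^sup>2) - real k' * (t * (norm v)\<^sup>2)\<bar> \<le> ell"
      by (auto simp: shift abs_le_iff)
    with distance \<open>1 * (2 * ell) \<le> _\<close> assms(1) show False by linarith
  qed
qed

text \<open>Translating the slab by multiples of \<open>2 ell / \<parallel>v\<parallel>\<^sup>2\<close> in direction \<open>v\<close>, towards the
  origin, yields \<open>N\<close> disjoint slabs each of which has Gaussian mass at least
  \<open>exp (- 4 N\<^sup>2 ell\<^sup>2 / (\<parallel>v\<parallel>\<^sup>2 \<rho>))\<close> times that of the original one.\<close>
lemma cn_slab_translates_le:
  fixes v :: "complex ^ 'n" and \<rho> a ell :: real and N :: nat
  defines "W \<equiv> density lborel (\<lambda>x. ennreal (cn_density \<rho> x))"
  assumes v: "v \<noteq> 0" and \<rho>: "\<rho> > 0" and ell: "ell > 0" and total: "emeasure W UNIV \<le> 1"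
  shows "real N * exp (- (4 * real N ^ 2 * ell\<^sup>2 / ((norm v)\<^sup>2 * \<rho>)))
      * measure W {x. a \<le> inner v x \<and> inner v x \<le> a + ell} \<le> 1"
proof -
  define E where "E = exp (- (4 * real N ^ 2 * ell\<^sup>2 / ((norm v)\<^sup>2 * \<rho>)))"
  define Sl where "Sl = {x. a \<le> inner v x \<and> inner v x \<le> a + ell}"
  define t where "t = (if a \<ge> 0 then -1 else 1) * 2 * ell / (norm v)\<^sup>2"
  define T where "T k = {x. x - (real k * t) *\<^sub>R v \<in> Sl}" for k :: nat
  have sets_W: "sets W = sets borel" and space_W: "space W = UNIV" unfolding W_def by simp_all
  interpret W: finite_measure W using total space_W by (intro finite_measureI) (auto simp: top_unique)
  have Sl_borel[measurable]: "Sl \<in> sets borel" unfolding Sl_def by measurable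
  have T_borel[measurable]: "T k \<in> sets borel" for k unfolding T_def by measurable
  have nv: "(norm v)\<^sup>2 > 0" using v by simp
  have translate: "ennreal E * emeasure W Sl \<le> emeasure W (T k)" if "k < N" for k
    unfolding W_def T_def
  proof (rule emeasure_density_translate_ge)
    fix y assume "y \<in> Sl"
    then have "2 * (real k * t) * inner v y + (real k * t)\<^sup>2 * (norm v)\<^sup>2 \<le> 4 * real N ^ 2 * ell\<^sup>2 / (norm v)\<^sup>2"
      unfolding t_def Sl_def using nv ell that by (intro slab_shift_exponent_le) auto
    then have "(norm ((real k * t) *\<^sub>R v + y))\<^sup>2 \<le> (norm y)\<^sup>2 + 4 * real N ^ 2 * ell\<^sup>2 / (norm v)\<^sup>2"
      unfolding norm_scaleR_add_power2 by simp
    from cn_density_add_ge[OF \<rho> this]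
    show "E * cn_density \<rho> y \<le> cn_density \<rho> ((real k * t) *\<^sub>R v + y)"
      unfolding E_def by (simp add: field_simps)
  qed (use \<rho> in \<open>auto simp: cn_density_nonneg E_def\<close>)
  have "\<bar>t\<bar> * (norm v)\<^sup>2 = 2 * ell" unfolding t_def using nv ell by (simp add: abs_mult)
  then have disjoint: "disjoint_family_on T {..<N}"
    unfolding T_def Sl_def using ell by (rule disjoint_family_slab_translates[rotated])
  have "(\<Sum>k<N. emeasure W (T k)) = emeasure W (\<Union>k<N. T k)"
    by (rule sum_emeasure[OF _ disjoint]) (auto simp: sets_W)
  also have "\<dots> \<le> emeasure W UNIV" by (intro emeasure_mono) (auto simp: sets_W)
  also have "\<dots> \<le> 1" by (fact total)
  finally have "(\<Sum>k<N. ennreal E * emeasure W Sl) \<le> 1"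
    using translate by (meson order.trans sum_mono lessThan_iff)
  then have "ennreal (real N * E * measure W Sl) \<le> 1"
    by (simp add: W.emeasure_eq_measure E_def ennreal_of_nat_eq_real_of_nat flip: ennreal_mult)
  then show ?thesis unfolding E_def Sl_def W_def by (simp add: ennreal_le_1)
qed

lemma nat_floor_between:
  fixes r :: real
  assumes "r \<ge> 1"
  shows "r / 2 \<le> real (nat \<lfloor>r\<rfloor>)" "real (nat \<lfloor>r\<rfloor>) \<le> r"
proof -
  have "real (nat \<lfloor>r\<rfloor>) = real_of_int \<lfloor>r\<rfloor>" using assms by simp
  moreover have "(1::int) \<le> \<lfloor>r\<rfloor>" using assms by (simp add: le_floor_iff)
  moreover have "r - 1 < real_of_int \<lfloor>r\<rfloor>" "real_of_int \<lfloor>r\<rfloor> \<le> r" by linarith+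
  ultimately show "r / 2 \<le> real (nat \<lfloor>r\<rfloor>)" "real (nat \<lfloor>r\<rfloor>) \<le> r" by linarith+
qed

text \<open>With \<open>N \<approx> \<parallel>v\<parallel> \<surd>\<rho> / (2 ell)\<close> translates the exponential factor is at least \<open>1 / e\<close>;
  the constant \<open>11\<close> is any bound for \<open>4 e\<close>.\<close>
lemma cn_slab_measure_le:
  fixes v :: "complex ^ 'n" and \<rho> a ell :: real
  defines "W \<equiv> density lborel (\<lambda>x. ennreal (cn_density \<rho> x))"
  assumes v: "v \<noteq> 0" and \<rho>: "\<rho> > 0" and ell: "ell > 0" and total: "emeasure W UNIV \<le> 1"
  shows "measure W {x. a \<le> inner v x \<and> inner v x \<le> a + ell} \<le> 11 * ell / (norm v * sqrt \<rho>)"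
proof -
  define p where "p = measure W {x. a \<le> inner v x \<and> inner v x \<le> a + ell}"
  define r where "r = norm v * sqrt \<rho> / (2 * ell)"
  have r: "r > 0" unfolding r_def using v \<rho> ell by simp
  have bound_r: "11 * ell / (norm v * sqrt \<rho>) = 11 / (2 * r)"
    unfolding r_def using v \<rho> ell by (simp add: field_simps)
  interpret W: finite_measure W
    using total by (intro finite_measureI) (auto simp: W_def top_unique)
  have space_W: "space W = UNIV" unfolding W_def by simp
  have "p \<le> measure W UNIV" unfolding p_def by (metis W.finite_measure_mono sets.top space_W subset_UNIV)
  also have "measure W UNIV \<le> 1" using total unfolding W.emeasure_eq_measure by (simp add: ennreal_le_1)
  finally have p1: "p \<le> 1" .
  show ?thesis
  proof (cases "r \<le> 1")
    case True
    then have "1 \<le> 11 / (2 * r)" using r by (simp add: field_simps)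
    then show ?thesis using p1 bound_r unfolding p_def by linarith
  next
    case False
    define N where "N = nat \<lfloor>r\<rfloor>"
    have N: "r / 2 \<le> real N" "real N \<le> r" unfolding N_def using False nat_floor_between by auto
    have "4 * real N ^ 2 * ell\<^sup>2 / ((norm v)\<^sup>2 * \<rho>) = (real N / r)\<^sup>2"
      unfolding r_def using v \<rho> ell by (simp add: field_simps power2_eq_square)
    also have "\<dots> \<le> 1" using N r by (simp add: power_le_one)
    finally have "real N * exp (-1) * p \<le> real N * exp (- (4 * real N ^ 2 * ell\<^sup>2 / ((norm v)\<^sup>2 * \<rho>))) * p"
      using N r unfolding p_def by (intro mult_right_mono mult_left_mono) auto
    also have "\<dots> \<le> 1" unfolding p_def W_def by (rule cn_slab_translates_le[OF v \<rho> ell total[unfolded W_def]])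
    finally have "p \<le> exp 1 / real N" using N r by (simp add: exp_minus field_simps)
    also have "\<dots> \<le> exp 1 / (r / 2)" using N r by (intro divide_left_mono) auto
    also have "\<dots> \<le> 11 / (2 * r)" using e_less_272 r by (simp add: divide_simps)
    finally show ?thesis using bound_r unfolding p_def by simp
  qed
qed

section \<open>Independence and expectations\<close>

lemma indep_rv_commute: "indep_rv M X Y \<Longrightarrow> indep_rv M Y X"
  unfolding indep_rv_def by (auto simp: conj_commute mult.commute)

lemma indep_rv_compose_right:
  fixes X :: "'a \<Rightarrow> 'x::topological_space" and Y :: "'a \<Rightarrow> 'y::topological_space"
    and f :: "'y \<Rightarrow> 'z::topological_space"
  assumes "indep_rv M X Y" and [measurable]: "f \<in> borel_measurable borel"
  shows "indep_rv M X (\<lambda>\<omega>. f (Y \<omega>))"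
  unfolding indep_rv_def
proof (intro conjI ballI)
  fix A :: "'x set" and B :: "'z set" assume "A \<in> sets borel" "B \<in> sets borel"
  moreover have "f -` B \<in> sets borel" using \<open>B \<in> sets borel\<close> by (rule measurable_sets_borel[rotated]) simp
  ultimately have "measure M {\<omega> \<in> space M. X \<omega> \<in> A \<and> Y \<omega> \<in> f -` B}
      = measure M {\<omega> \<in> space M. X \<omega> \<in> A} * measure M {\<omega> \<in> space M. Y \<omega> \<in> f -` B}"
    using assms(1) unfolding indep_rv_def by blast
  then show "measure M {\<omega> \<in> space M. X \<omega> \<in> A \<and> f (Y \<omega>) \<in> B}
      = measure M {\<omega> \<in> space M. X \<omega> \<in> A} * measure M {\<omega> \<in> space M. f (Y \<omega>) \<in> B}"
    by simp
qed (use assms(1) in \<open>auto simp: indep_rv_def\<close>)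

lemma indep_rv_distr_pair:
  fixes X :: "'a \<Rightarrow> 'x::second_countable_topology" and Y :: "'a \<Rightarrow> 'y::second_countable_topology"
  assumes "prob_space M" and indep: "indep_rv M X Y"
  shows "distr M borel (\<lambda>\<omega>. (X \<omega>, Y \<omega>)) = distr M borel X \<Otimes>\<^sub>M distr M borel Y"
proof (rule pair_measure_eqI[symmetric])
  interpret prob_space M by fact
  have [measurable]: "X \<in> borel_measurable M" "Y \<in> borel_measurable M"
    using indep unfolding indep_rv_def by auto
  show "sigma_finite_measure (distr M borel X)" "sigma_finite_measure (distr M borel Y)"
    by (simp_all add: prob_space_distr prob_space_imp_sigma_finite)
  have sets_pair: "sets (distr M borel X \<Otimes>\<^sub>M distr M borel Y) = sets (borel :: ('x \<times> 'y) measure)"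
    by (simp add: borel_prod[symmetric] cong: sets_pair_measure_cong)
  then show "sets (distr M borel X \<Otimes>\<^sub>M distr M borel Y) = sets (distr M borel (\<lambda>\<omega>. (X \<omega>, Y \<omega>)))"
    by simp
  fix A B assume "A \<in> sets (distr M borel X)" "B \<in> sets (distr M borel Y)"
  then have [measurable]: "A \<in> sets borel" "B \<in> sets borel" by auto
  have "A \<times> B \<in> sets (borel :: ('x \<times> 'y) measure)"
    using sets_pair pair_measureI[of A "distr M borel X" B "distr M borel Y"] by simp
  then have "emeasure (distr M borel (\<lambda>\<omega>. (X \<omega>, Y \<omega>))) (A \<times> B)
      = emeasure M {\<omega> \<in> space M. X \<omega> \<in> A \<and> Y \<omega> \<in> B}"
    by (subst emeasure_distr) (auto intro!: arg_cong[where f="emeasure M"])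
  also have "\<dots> = ennreal (measure M {\<omega> \<in> space M. X \<omega> \<in> A} * measure M {\<omega> \<in> space M. Y \<omega> \<in> B})"
    using indep unfolding indep_rv_def by (simp add: emeasure_eq_measure)
  also have "\<dots> = emeasure (distr M borel X) A * emeasure (distr M borel Y) B"
    by (simp add: emeasure_distr emeasure_eq_measure ennreal_mult vimage_def Int_def conj_commute)
  finally show "emeasure (distr M borel X) A * emeasure (distr M borel Y) B
      = emeasure (distr M borel (\<lambda>\<omega>. (X \<omega>, Y \<omega>))) (A \<times> B)" by simp
qed

lemma emeasure_indep_pair:
  fixes X :: "'a \<Rightarrow> 'x::second_countable_topology" and Y :: "'a \<Rightarrow> 'y::second_countable_topology"
  assumes "prob_space M" "indep_rv M X Y" and E: "E \<in> sets (borel :: ('x \<times> 'y) measure)"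
  shows "emeasure M {\<omega> \<in> space M. (X \<omega>, Y \<omega>) \<in> E}
    = (\<integral>\<^sup>+x. emeasure (distr M borel Y) (Pair x -` E) \<partial>distr M borel X)"
proof -
  interpret prob_space M by fact
  have [measurable]: "X \<in> borel_measurable M" "Y \<in> borel_measurable M"
    using assms(2) unfolding indep_rv_def by auto
  interpret Y: prob_space "distr M borel Y" by (rule prob_space_distr) simp
  have "emeasure M {\<omega> \<in> space M. (X \<omega>, Y \<omega>) \<in> E} = emeasure (distr M borel (\<lambda>\<omega>. (X \<omega>, Y \<omega>))) E"
    using E by (subst emeasure_distr) (auto intro!: arg_cong[where f="emeasure M"])
  also have "\<dots> = (\<integral>\<^sup>+x. emeasure (distr M borel Y) (Pair x -` E) \<partial>distr M borel X)"
    unfolding indep_rv_distr_pair[OF assms(1,2)]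
    by (rule Y.emeasure_pair_measure_alt) (use E in \<open>simp add: borel_prod[symmetric] cong: sets_pair_measure_cong\<close>)
  finally show ?thesis .
qed

lemma prob_indep_pair_le:
  fixes X :: "'a \<Rightarrow> 'x::second_countable_topology" and Y :: "'a \<Rightarrow> 'y::second_countable_topology"
  assumes "prob_space M" "indep_rv M X Y" "E \<in> sets (borel :: ('x \<times> 'y) measure)"
    and section_le: "\<And>x. measure M {\<omega> \<in> space M. (x, Y \<omega>) \<in> E} \<le> b"
  shows "measure M {\<omega> \<in> space M. (X \<omega>, Y \<omega>) \<in> E} \<le> b"
proof -
  interpret prob_space M by fact
  have [measurable]: "X \<in> borel_measurable M" "Y \<in> borel_measurable M"
    using assms(2) unfolding indep_rv_def by auto
  interpret X: prob_space "distr M borel X" by (rule prob_space_distr) simp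
  have b: "b \<ge> 0" using section_le[of undefined] measure_nonneg order.trans by blast
  have "emeasure M {\<omega> \<in> space M. (X \<omega>, Y \<omega>) \<in> E} \<le> (\<integral>\<^sup>+x. ennreal b \<partial>distr M borel X)"
    unfolding emeasure_indep_pair[OF assms(1-3)]
  proof (intro nn_integral_mono)
    fix x
    have "Pair x -` E \<in> sets borel" using assms(3) by (rule measurable_sets_borel[rotated]) simp
    then have "emeasure (distr M borel Y) (Pair x -` E) = emeasure M {\<omega> \<in> space M. (x, Y \<omega>) \<in> E}"
      by (subst emeasure_distr) (auto intro!: arg_cong[where f="emeasure M"])
    then show "emeasure (distr M borel Y) (Pair x -` E) \<le> ennreal b"
      using section_le[of x] by (simp add: emeasure_eq_measure ennreal_leI)
  qed
  also have "\<dots> = ennreal b" using X.emeasure_space_1 by simp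
  finally show ?thesis using b by (simp add: emeasure_eq_measure)
qed

lemma measure_eqI_pair_rectangles:
  assumes "sets M = sets (M1 \<Otimes>\<^sub>M M2)" "sets N = sets (M1 \<Otimes>\<^sub>M M2)"
    and "emeasure M (space M1 \<times> space M2) \<noteq> \<infinity>"
    and "\<And>A B. A \<in> sets M1 \<Longrightarrow> B \<in> sets M2 \<Longrightarrow> emeasure M (A \<times> B) = emeasure N (A \<times> B)"
  shows "M = N"
proof (rule measure_eqI_generator_eq[OF Int_stable_pair_measure_generator[of M1 M2],
      where \<Omega>="space M1 \<times> space M2" and A="\<lambda>_. space M1 \<times> space M2"])
  show "{a \<times> b |a b. a \<in> sets M1 \<and> b \<in> sets M2} \<subseteq> Pow (space M1 \<times> space M2)"
    using sets.space_closed[of M1] sets.space_closed[of M2] by auto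
  show "sets M = sigma_sets (space M1 \<times> space M2) {a \<times> b |a b. a \<in> sets M1 \<and> b \<in> sets M2}"
    "sets N = sigma_sets (space M1 \<times> space M2) {a \<times> b |a b. a \<in> sets M1 \<and> b \<in> sets M2}"
    using assms(1,2) by (simp_all add: sets_pair_measure)
qed (use assms(3,4) in auto)

context prob_space
begin

lemma sum_abs_prob_eq_diff_le:
  assumes "finite K"
    and A: "\<And>x. {\<omega> \<in> space M. X \<omega> = x} \<in> events" and B: "\<And>x. {\<omega> \<in> space M. Y \<omega> = x} \<in> events"
    and E: "{\<omega> \<in> space M. X \<omega> \<noteq> Y \<omega>} \<in> events"
  shows "(\<Sum>x\<in>K. \<bar>prob {\<omega> \<in> space M. X \<omega> = x} - prob {\<omega> \<in> space M. Y \<omega> = x}\<bar>)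
    \<le> 2 * prob {\<omega> \<in> space M. X \<omega> \<noteq> Y \<omega>}"
proof -
  let ?A = "\<lambda>x. {\<omega> \<in> space M. X \<omega> = x}" and ?B = "\<lambda>x. {\<omega> \<in> space M. Y \<omega> = x}"
  let ?E = "{\<omega> \<in> space M. X \<omega> \<noteq> Y \<omega>}"
  have pointwise: "\<bar>prob (?A x) - prob (?B x)\<bar> \<le> prob (?A x - ?B x) + prob (?B x - ?A x)" for x
    using finite_measure_Diff'[OF A B, of x x] finite_measure_Diff'[OF B A, of x x]
      finite_measure_mono[of "?A x \<inter> ?B x" "?A x"] finite_measure_mono[of "?A x \<inter> ?B x" "?B x"] A B
    by (auto simp: Int_commute abs_le_iff)
  have mismatch: "(\<Sum>x\<in>K. prob (D x)) \<le> prob ?E"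
    if "\<And>x. D x \<in> events" "disjoint_family_on D K" "\<And>x. D x \<subseteq> ?E" for D
  proof -
    have "(\<Sum>x\<in>K. prob (D x)) = prob (\<Union>x\<in>K. D x)"
      using that \<open>finite K\<close> by (intro finite_measure_finite_Union[symmetric]) auto
    also have "\<dots> \<le> prob ?E" using that E by (intro finite_measure_mono) auto
    finally show ?thesis .
  qed
  have "(\<Sum>x\<in>K. \<bar>prob (?A x) - prob (?B x)\<bar>) \<le> (\<Sum>x\<in>K. prob (?A x - ?B x)) + (\<Sum>x\<in>K. prob (?B x - ?A x))"
    using pointwise by (simp add: sum_mono flip: sum.distrib)
  also have "\<dots> \<le> prob ?E + prob ?E"
    using A B by (intro add_mono mismatch) (auto simp: disjoint_family_on_def)
  finally show ?thesis by simp
qed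

lemma integral_abs_le_one_of_square:
  fixes f :: "'a \<Rightarrow> real"
  assumes "f \<in> borel_measurable M" "integrable M (\<lambda>x. (f x)\<^sup>2)" "(\<integral>x. (f x)\<^sup>2 \<partial>M) \<le> 1"
  shows "integrable M (\<lambda>x. \<bar>f x\<bar>)" "(\<integral>x. \<bar>f x\<bar> \<partial>M) \<le> 1"
proof -
  have am_gm: "\<bar>f x\<bar> \<le> (1 + (f x)\<^sup>2) / 2" for x
    using zero_le_power2[of "\<bar>f x\<bar> - 1"] by (simp add: power2_eq_square algebra_simps)
  have bound_integrable: "integrable M (\<lambda>x. (1 + (f x)\<^sup>2) / 2)" using assms(2) by simp
  show integrable: "integrable M (\<lambda>x. \<bar>f x\<bar>)"
    by (rule Bochner_Integration.integrable_bound[OF bound_integrable])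
      (use assms(1) am_gm in \<open>auto intro!: AE_I2 simp: abs_le_iff\<close>)
  have "(\<integral>x. \<bar>f x\<bar> \<partial>M) \<le> (\<integral>x. (1 + (f x)\<^sup>2) / 2 \<partial>M)"
    by (rule integral_mono[OF integrable bound_integrable am_gm])
  also have "\<dots> = (1 + (\<integral>x. (f x)\<^sup>2 \<partial>M)) / 2"
    using assms(2) by (simp add: prob_space)
  finally show "(\<integral>x. \<bar>f x\<bar> \<partial>M) \<le> 1" using assms(3) by simp
qed

lemma integral_abs_diff_mean_le:
  fixes f :: "'a \<Rightarrow> real"
  assumes "integrable M f"
  shows "(\<integral>x. \<bar>f x - (\<integral>y. f y \<partial>M)\<bar> \<partial>M) \<le> 2 * (\<integral>x. \<bar>f x - c\<bar> \<partial>M)"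
proof -
  define a where "a = (\<integral>x. \<bar>f x - c\<bar> \<partial>M)"
  have "\<bar>(\<integral>y. f y \<partial>M) - c\<bar> = \<bar>\<integral>y. f y - c \<partial>M\<bar>"
    using assms by (simp add: prob_space)
  also have "\<dots> \<le> a" unfolding a_def by (rule integral_abs_bound)
  finally have mean: "\<bar>(\<integral>y. f y \<partial>M) - c\<bar> \<le> a" .
  have "(\<integral>x. \<bar>f x - (\<integral>y. f y \<partial>M)\<bar> \<partial>M) \<le> (\<integral>x. \<bar>f x - c\<bar> + a \<partial>M)"
    using assms mean by (intro integral_mono) auto
  also have "\<dots> = a + a" using assms unfolding a_def by (simp add: prob_space)
  finally show ?thesis unfolding a_def by simp
qed

text \<open>Since \<open>f\<close> has mean \<open>p\<close>, the integrand \<open>f ln (f / p)\<close> may be replaced by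
  \<open>f ln f - p ln p\<close>, to which the modulus of continuity of \<open>x ln x\<close> applies.\<close>
lemma integral_xlnx_ratio_le:
  fixes f :: "'a \<Rightarrow> real"
  defines "p \<equiv> \<integral>x. f x \<partial>M"
  assumes [measurable]: "f \<in> borel_measurable M"
    and bounds: "\<And>x. x \<in> space M \<Longrightarrow> 0 \<le> f x \<and> f x \<le> 1" and "p > 0" "\<tau> > 0"
  shows "(\<integral>x. f x * ln (f x / p) \<partial>M) \<le> \<tau> - ln \<tau> * (\<integral>x. \<bar>f x - p\<bar> \<partial>M)"
proof -
  have integrable_bounded: "integrable M g" if [measurable]: "g \<in> borel_measurable M"
    and "\<And>x. x \<in> space M \<Longrightarrow> \<bar>g x\<bar> \<le> B" for g :: "'a \<Rightarrow> real" and B :: real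
    using that by (intro integrable_const_bound[where B=B]) auto
  have f: "integrable M f" using bounds by (intro integrable_bounded[of f 1]) auto
  have p1: "p \<le> 1" unfolding p_def using bounds by (intro integral_le_const) (auto intro: f)
  have xlnx_f: "integrable M (\<lambda>x. f x * ln (f x) - p * ln p)"
  proof (rule integrable_bounded[of _ "2 + \<bar>p * ln p\<bar>"])
    fix x assume "x \<in> space M"
    then have "\<bar>f x * ln (f x)\<bar> \<le> (f x)\<^sup>2 + 1" "(f x)\<^sup>2 \<le> 1"
      using bounds abs_xlnx_le[of "f x"] by (auto simp: power_le_one)
    then show "\<bar>f x * ln (f x) - p * ln p\<bar> \<le> 2 + \<bar>p * ln p\<bar>"
      using abs_triangle_ineq4[of "f x * ln (f x)" "p * ln p"] by linarith
  qed simp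
  have abs_f: "integrable M (\<lambda>x. \<bar>f x - p\<bar>)" using f by simp
  have "(\<integral>x. f x * ln (f x / p) \<partial>M) = (\<integral>x. (f x * ln (f x) - p * ln p) + (p - f x) * ln p \<partial>M)"
  proof (rule Bochner_Integration.integral_cong[OF refl])
    fix x assume "x \<in> space M"
    then show "f x * ln (f x / p) = (f x * ln (f x) - p * ln p) + (p - f x) * ln p"
      using bounds[of x] \<open>p > 0\<close> by (cases "f x = 0") (auto simp: ln_div algebra_simps)
  qed
  also have "\<dots> = (\<integral>x. f x * ln (f x) - p * ln p \<partial>M)"
    using xlnx_f f by (simp add: prob_space p_def flip: p_def)
  also have "\<dots> \<le> (\<integral>x. \<tau> - \<bar>f x - p\<bar> * ln \<tau> \<partial>M)"
    using xlnx_f abs_f bounds p1 \<open>p > 0\<close> \<open>\<tau> > 0\<close> abs_xlnx_diff_le[of "f _" p \<tau>]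
    by (intro integral_mono) (auto simp: abs_le_iff)
  also have "\<dots> = \<tau> - ln \<tau> * (\<integral>x. \<bar>f x - p\<bar> \<partial>M)"
    using abs_f by (simp add: prob_space mult.commute)
  finally show ?thesis .
qed

end

section \<open>Asymptotics\<close>

lemma info_bound_le_powr:
  fixes \<rho> m C \<epsilon> :: real and k :: nat
  assumes "\<rho> \<ge> 1" "0 \<le> m" "m \<le> \<rho> powr (1/2 - \<epsilon>)" "C \<ge> 0"
  shows "m ^ (2 * k) * \<rho> powr (- real k) + real k * ln \<rho> * (C * m / sqrt \<rho>)
    \<le> \<rho> powr (- (2 * real k * \<epsilon>)) + real k * C * (ln \<rho> * \<rho> powr (- \<epsilon>))"
proof -
  have "m ^ (2 * k) \<le> (\<rho> powr (1/2 - \<epsilon>)) ^ (2 * k)"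
    using assms by (intro power_mono) auto
  also have "\<dots> = \<rho> powr (real k - 2 * real k * \<epsilon>)"
    using assms by (simp add: powr_realpow[symmetric] powr_powr algebra_simps)
  finally have "m ^ (2 * k) * \<rho> powr (- real k) \<le> \<rho> powr (real k - 2 * real k * \<epsilon>) * \<rho> powr (- real k)"
    by (rule mult_right_mono) simp
  also have "\<dots> = \<rho> powr (- (2 * real k * \<epsilon>))" using assms by (simp flip: powr_add)
  finally have first: "m ^ (2 * k) * \<rho> powr (- real k) \<le> \<rho> powr (- (2 * real k * \<epsilon>))" .
  have "m / sqrt \<rho> \<le> \<rho> powr (1/2 - \<epsilon>) / \<rho> powr (1/2)"
    using assms by (simp add: powr_half_sqrt divide_right_mono)
  also have "\<dots> = \<rho> powr (- \<epsilon>)" using assms by (simp add: powr_diff[symmetric])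
  finally have "real k * C * ln \<rho> * (m / sqrt \<rho>) \<le> real k * C * ln \<rho> * \<rho> powr (- \<epsilon>)"
    using assms by (intro mult_left_mono) auto
  then have "real k * ln \<rho> * (C * m / sqrt \<rho>) \<le> real k * C * (ln \<rho> * \<rho> powr (- \<epsilon>))"
    by (simp add: ac_simps)
  with first show ?thesis by simp
qed

lemma info_bound_tendsto_zero:
  fixes m :: "real \<Rightarrow> real" and k :: nat and C \<epsilon> :: real
  assumes "\<epsilon> > 0" "k > 0" "C \<ge> 0" "\<And>\<rho>. m \<rho> \<ge> 0"
    and "((\<lambda>\<rho>. m \<rho> * \<rho> powr (\<epsilon> - 1/2)) \<longlongrightarrow> 0) at_top"
  shows "((\<lambda>\<rho>. m \<rho> ^ (2 * k) * \<rho> powr (- real k) + real k * ln \<rho> * (C * m \<rho> / sqrt \<rho>)) \<longlongrightarrow> 0) at_top"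
proof (rule tendsto_sandwich)
  let ?g = "\<lambda>\<rho>::real. \<rho> powr (- (2 * real k * \<epsilon>)) + real k * C * (ln \<rho> * \<rho> powr (- \<epsilon>))"
  have "\<forall>\<^sub>F \<rho> in at_top. m \<rho> \<le> \<rho> powr (1/2 - \<epsilon>)"
    using order_tendstoD(2)[OF assms(5) zero_less_one] eventually_gt_at_top[of 0]
  proof eventually_elim
    case (elim \<rho>)
    have "m \<rho> * \<rho> powr (\<epsilon> - 1/2) * \<rho> powr (1/2 - \<epsilon>) \<le> 1 * \<rho> powr (1/2 - \<epsilon>)"
      using elim by (intro mult_right_mono) auto
    moreover have "\<rho> powr (\<epsilon> - 1/2) * \<rho> powr (1/2 - \<epsilon>) = 1"
      using elim by (simp flip: powr_add)
    ultimately show ?case by (simp add: mult.assoc)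
  qed
  with eventually_ge_at_top[of 1]
  show "\<forall>\<^sub>F \<rho> in at_top. m \<rho> ^ (2 * k) * \<rho> powr (- real k) + real k * ln \<rho> * (C * m \<rho> / sqrt \<rho>) \<le> ?g \<rho>"
    by eventually_elim (rule info_bound_le_powr; use assms(3,4) in auto)
  show "\<forall>\<^sub>F \<rho> in at_top. 0 \<le> m \<rho> ^ (2 * k) * \<rho> powr (- real k) + real k * ln \<rho> * (C * m \<rho> / sqrt \<rho>)"
    using eventually_ge_at_top[of 1] by eventually_elim (use assms(3,4) in simp)
  have "((\<lambda>\<rho>::real. \<rho> powr (- (2 * real k * \<epsilon>))) \<longlongrightarrow> 0) at_top"
    using assms(1,2) by real_asymp
  moreover have "((\<lambda>\<rho>::real. ln \<rho> * \<rho> powr (- \<epsilon>)) \<longlongrightarrow> 0) at_top"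
    using assms(1) by real_asymp
  ultimately have "(?g \<longlongrightarrow> 0 + real k * C * 0) at_top" by (intro tendsto_intros)
  then show "(?g \<longlongrightarrow> 0) at_top" by simp
qed simp

lemma no_positive_limit_if_dominated:
  fixes f g :: "real \<Rightarrow> real"
  assumes "\<exists>L :: ereal. L > 0 \<and> ((\<lambda>x. ereal (f x)) \<longlongrightarrow> L) at_top"
    and "(g \<longlongrightarrow> 0) at_top" and "\<And>x. x \<ge> a \<Longrightarrow> f x \<le> g x"
  shows False
proof -
  obtain L :: ereal where "L > 0" and f: "((\<lambda>x. ereal (f x)) \<longlongrightarrow> L) at_top" using assms(1) by blast
  have g: "((\<lambda>x. ereal (g x)) \<longlongrightarrow> ereal 0) at_top" using assms(2) by (simp add: lim_ereal)
  have "\<forall>\<^sub>F x in at_top. ereal (f x) \<le> ereal (g x)"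
    using eventually_ge_at_top[of a] by eventually_elim (simp add: assms(3))
  then have "L \<le> ereal 0" by (rule tendsto_le[OF trivial_limit_at_top_linorder g f])
  with \<open>L > 0\<close> show False by (simp add: zero_ereal_def)
qed

section \<open>The jammed quantized channel\<close>

lemma matrix_vector_mult_borel_measurable[measurable]:
  "(\<lambda>x. (A :: complex ^ 'n ^ 'm) *v x) \<in> borel_measurable borel"
  unfolding matrix_vector_mult_def by (intro borel_measurable_continuous_onI continuous_intros)

lemma continuous_on_reim_comp[continuous_intros]:
  "continuous_on S f \<Longrightarrow> continuous_on S (\<lambda>x. reim_comp (f x) c)"
  unfolding reim_comp_def by (cases "snd c") (auto intro!: continuous_intros)

lemma reim_comp_borel_measurable[measurable]: "(\<lambda>y. reim_comp y c) \<in> borel_measurable borel"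
  by (intro borel_measurable_continuous_onI continuous_intros)

lemma reim_comp_add: "reim_comp (x + y) c = reim_comp x c + reim_comp y c"
  unfolding reim_comp_def by (cases "snd c") auto

lemma abs_reim_comp_le: "\<bar>reim_comp y c\<bar> \<le> cmod (y $ fst c)"
  unfolding reim_comp_def by (cases "snd c") (auto simp: abs_Re_le_cmod abs_Im_le_cmod)

definition reim_row :: "complex ^ 'i ^ 'b \<Rightarrow> 'b \<times> reim \<Rightarrow> complex ^ 'i" where
  "reim_row J c = (\<chi> i. case snd c of ReP \<Rightarrow> cnj (J $ fst c $ i) | ImP \<Rightarrow> \<i> * cnj (J $ fst c $ i))"

lemma reim_comp_matrix_vector_mult: "reim_comp (J *v x) c = inner (reim_row J c) x"
  unfolding reim_comp_def reim_row_def matrix_vector_mult_def inner_vec_def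
  by (cases "snd c") (auto simp: inner_complex_def Re_sum Im_sum intro!: sum.cong)

lemma norm_reim_row: "norm (reim_row J c) = norm (J $ fst c)"
  unfolding reim_row_def norm_vec_def by (cases "snd c") (auto simp: norm_mult)

lemma UNIV_reim: "(UNIV :: reim set) = {ReP, ImP}"
  using reim.exhaust by auto

lemma finite_UNIV_reim_components: "finite (UNIV :: ('b::finite \<times> reim) set)"
  by (simp add: UNIV_reim flip: UNIV_Times_UNIV)

text \<open>The factor \<open>44 = 4 * 11\<close>: a quantizer jump caused by a shift \<open>\<delta>\<close> forces the component
  into a slab of width \<open>4 \<bar>\<delta>\<bar>\<close> around a threshold (\<open>prob_quantizer_flip_le\<close>).\<close>
definition flip_constant :: "complex ^ 'u ^ 'b \<Rightarrow> complex ^ 'i ^ 'b \<Rightarrow> real" where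
  "flip_constant H J =
    (\<Sum>c\<in>(UNIV :: ('b \<times> reim) set). 44 / norm (J $ fst c) * (\<Sum>u\<in>UNIV. cmod (H $ fst c $ u)))"

lemma flip_constant_nonneg: "flip_constant H J \<ge> 0"
  unfolding flip_constant_def by (intro sum_nonneg mult_nonneg_nonneg) auto

locale jammed_quantized_channel =
  fixes H :: "complex ^ 'u ^ 'b" and J :: "complex ^ 'i ^ 'b" and \<rho> :: real
    and \<Omega> :: "'a measure" and s :: "'a \<Rightarrow> complex ^ 'u" and w :: "'a \<Rightarrow> complex ^ 'i"
    and n :: "'a \<Rightarrow> complex ^ 'b" and Q :: "'b \<times> reim \<Rightarrow> real \<Rightarrow> real" and m :: nat
  assumes \<rho>_pos: "\<rho> > 0"
    and prob_space_\<Omega>: "prob_space \<Omega>"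
    and s_measurable[measurable]: "s \<in> borel_measurable \<Omega>"
    and w_gaussian: "distributed \<Omega> lborel w (\<lambda>x. ennreal (cn_density \<rho> x))"
    and indep_w_n: "indep_rv \<Omega> w n"
    and indep_s_wn: "indep_rv \<Omega> s (\<lambda>\<omega>. (w \<omega>, n \<omega>))"
    and s_power_integrable: "\<And>u. integrable \<Omega> (\<lambda>\<omega>. (cmod (s \<omega> $ u))\<^sup>2)"
    and s_power: "\<And>u. (\<integral>\<omega>. (cmod (s \<omega> $ u))\<^sup>2 \<partial>\<Omega>) \<le> 1"
    and quantizer: "\<And>c. is_quantizer (Q c) m"
    and J_rows: "\<And>b. J $ b \<noteq> 0"
begin

sublocale prob_space \<Omega> by (rule prob_space_\<Omega>)

lemma w_measurable[measurable]: "w \<in> borel_measurable \<Omega>"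
  and n_measurable[measurable]: "n \<in> borel_measurable \<Omega>"
  using indep_w_n unfolding indep_rv_def by auto

lemma Q_measurable[measurable]: "Q c \<in> borel_measurable borel"
  by (rule quantizer_borel_measurable[OF quantizer])

definition noise :: "'a \<Rightarrow> complex ^ 'b" where
  "noise \<omega> = J *v w \<omega> + n \<omega>"

definition channel :: "complex ^ 'u \<Rightarrow> complex ^ 'b \<Rightarrow> 'b \<times> reim \<Rightarrow> real" where
  "channel \<sigma> z = quantize Q (H *v \<sigma> + z)"

lemma noise_measurable[measurable]: "noise \<in> borel_measurable \<Omega>"
  unfolding noise_def by measurable

lemma emeasure_gaussian_UNIV:
  "emeasure (density lborel (\<lambda>x :: complex ^ 'i. ennreal (cn_density \<rho> x))) UNIV \<le> 1"
proof -
  have law: "density lborel (\<lambda>x. ennreal (cn_density \<rho> x)) = distr \<Omega> lborel w"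
    using distributed_distr_eq_density[OF w_gaussian] by simp
  have "prob_space (distr \<Omega> lborel w)"
    by (rule prob_space_distr) (use distributed_measurable[OF w_gaussian] in auto)
  then have "emeasure (distr \<Omega> lborel w) (space (distr \<Omega> lborel w)) = 1"
    by (rule prob_space.emeasure_space_1)
  then show ?thesis unfolding law by simp
qed

lemma prob_w_slab_le:
  assumes "v \<noteq> 0" "ell > 0"
  shows "prob {\<omega> \<in> space \<Omega>. a \<le> inner v (w \<omega>) \<and> inner v (w \<omega>) \<le> a + ell} \<le> 11 * ell / (norm v * sqrt \<rho>)"
proof -
  have "prob {\<omega> \<in> space \<Omega>. a \<le> inner v (w \<omega>) \<and> inner v (w \<omega>) \<le> a + ell}
      = measure (distr \<Omega> lborel w) {x. a \<le> inner v x \<and> inner v x \<le> a + ell}"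
    using distributed_measurable[OF w_gaussian]
    by (subst measure_distr) (auto intro!: arg_cong[where f=prob])
  also have "\<dots> \<le> 11 * ell / (norm v * sqrt \<rho>)"
    unfolding distributed_distr_eq_density[OF w_gaussian]
    by (rule cn_slab_measure_le[OF assms(1) \<rho>_pos assms(2) emeasure_gaussian_UNIV])
  finally show ?thesis .
qed

text \<open>The jammer component \<open>reim_comp (J w) c\<close> is a nondegenerate Gaussian because the row
  \<open>J $ fst c\<close> is nonzero; the independent noise \<open>n\<close> only shifts the slab.\<close>
lemma prob_noise_slab_le:
  assumes "ell > 0"
  shows "prob {\<omega> \<in> space \<Omega>. a \<le> reim_comp (noise \<omega>) c \<and> reim_comp (noise \<omega>) c \<le> a + ell}
    \<le> 11 * ell / (norm (J $ fst c) * sqrt \<rho>)"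
proof -
  define v where "v = reim_row J c"
  have v: "v \<noteq> 0" "norm v = norm (J $ fst c)"
    using norm_reim_row[of J c] J_rows[of "fst c"] unfolding v_def by auto
  define E where "E = {(y, x). a \<le> inner v x + reim_comp y c \<and> inner v x + reim_comp y c \<le> a + ell}"
  have "(\<lambda>p::(complex ^ 'b) \<times> (complex ^ 'i). inner v (snd p) + reim_comp (fst p) c) \<in> borel_measurable borel"
    by (intro borel_measurable_continuous_onI continuous_intros)
  from measurable_sets_borel[OF this atLeastAtMost_borel]
  have E: "E \<in> sets (borel :: ((complex ^ 'b) \<times> (complex ^ 'i)) measure)"
    by (simp add: E_def vimage_def case_prod_unfold)
  have "prob {\<omega> \<in> space \<Omega>. (n \<omega>, w \<omega>) \<in> E} \<le> 11 * ell / (norm (J $ fst c) * sqrt \<rho>)"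
  proof (rule prob_indep_pair_le[OF prob_space_\<Omega> indep_rv_commute[OF indep_w_n] E])
    fix y
    show "prob {\<omega> \<in> space \<Omega>. (y, w \<omega>) \<in> E} \<le> 11 * ell / (norm (J $ fst c) * sqrt \<rho>)"
      using prob_w_slab_le[OF v(1) assms, of "a - reim_comp y c"] unfolding E_def v(2)
      by (simp add: algebra_simps)
  qed
  then show ?thesis
    by (simp add: E_def v_def noise_def reim_comp_add reim_comp_matrix_vector_mult add.commute)
qed

lemma prob_quantizer_flip_le:
  "prob {\<omega> \<in> space \<Omega>. Q c (\<delta> + reim_comp (noise \<omega>) c) \<noteq> Q c (reim_comp (noise \<omega>) c)}
    \<le> real m * (44 * \<bar>\<delta>\<bar> / (norm (J $ fst c) * sqrt \<rho>))"
proof (cases "\<delta> = 0")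
  case False
  obtain T where T: "finite T" "card T \<le> m"
    "\<And>t \<delta>. Q c (t + \<delta>) \<noteq> Q c t \<Longrightarrow> \<exists>e\<in>T. \<bar>t - e\<bar> \<le> 2 * \<bar>\<delta>\<bar>"
    using quantizer_thresholds[OF quantizer[of c]] by blast
  define A where "A e = {\<omega> \<in> space \<Omega>. e - 2 * \<bar>\<delta>\<bar> \<le> reim_comp (noise \<omega>) c
      \<and> reim_comp (noise \<omega>) c \<le> e - 2 * \<bar>\<delta>\<bar> + 4 * \<bar>\<delta>\<bar>}" for e
  have "A e \<in> events" for e unfolding A_def by measurable
  then have events: "A ` T \<subseteq> events" by auto
  have "{\<omega> \<in> space \<Omega>. Q c (\<delta> + reim_comp (noise \<omega>) c) \<noteq> Q c (reim_comp (noise \<omega>) c)} \<subseteq> (\<Union>e\<in>T. A e)"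
  proof
    fix \<omega> assume "\<omega> \<in> {\<omega> \<in> space \<Omega>. Q c (\<delta> + reim_comp (noise \<omega>) c) \<noteq> Q c (reim_comp (noise \<omega>) c)}"
    then have \<omega>: "\<omega> \<in> space \<Omega>" and "Q c (reim_comp (noise \<omega>) c + \<delta>) \<noteq> Q c (reim_comp (noise \<omega>) c)"
      by (auto simp: add.commute)
    then obtain e where "e \<in> T" "\<bar>reim_comp (noise \<omega>) c - e\<bar> \<le> 2 * \<bar>\<delta>\<bar>" using T(3) by blast
    then show "\<omega> \<in> (\<Union>e\<in>T. A e)" unfolding A_def using \<omega> by (intro UN_I[of e]) (auto simp: abs_le_iff)
  qed
  then have "prob {\<omega> \<in> space \<Omega>. Q c (\<delta> + reim_comp (noise \<omega>) c) \<noteq> Q c (reim_comp (noise \<omega>) c)}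
      \<le> prob (\<Union>e\<in>T. A e)"
    using events T(1) by (intro finite_measure_mono) auto
  also have "\<dots> \<le> (\<Sum>e\<in>T. prob (A e))" by (rule finite_measure_subadditive_finite[OF T(1) events])
  also have "\<dots> \<le> (\<Sum>e\<in>T. 11 * (4 * \<bar>\<delta>\<bar>) / (norm (J $ fst c) * sqrt \<rho>))"
    unfolding A_def using False by (intro sum_mono prob_noise_slab_le) simp
  also have "\<dots> = real (card T) * (44 * \<bar>\<delta>\<bar> / (norm (J $ fst c) * sqrt \<rho>))" by simp
  also have "\<dots> \<le> real m * (44 * \<bar>\<delta>\<bar> / (norm (J $ fst c) * sqrt \<rho>))"
    using T(2) \<rho>_pos by (intro mult_right_mono) auto
  finally show ?thesis .
qed simp

definition flip_bound :: "complex ^ 'u \<Rightarrow> real" where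
  "flip_bound \<sigma> = (\<Sum>c\<in>UNIV. real m * (44 * \<bar>reim_comp (H *v \<sigma>) c\<bar> / (norm (J $ fst c) * sqrt \<rho>)))"

lemma channel_flip_event: "{\<omega> \<in> space \<Omega>. channel \<sigma> (noise \<omega>) \<noteq> channel \<sigma>' (noise \<omega>)} \<in> events"
proof -
  have "{\<omega> \<in> space \<Omega>. channel \<sigma> (noise \<omega>) \<noteq> channel \<sigma>' (noise \<omega>)}
      = (\<Union>c. {\<omega> \<in> space \<Omega>. Q c (reim_comp (H *v \<sigma> + noise \<omega>) c) \<noteq> Q c (reim_comp (H *v \<sigma>' + noise \<omega>) c)})"
    unfolding channel_def quantize_def by (auto simp: fun_eq_iff)
  also have "\<dots> \<in> events" by (intro sets.finite_UN finite_UNIV_reim_components) measurable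
  finally show ?thesis .
qed

lemma prob_channel_flip_le:
  "prob {\<omega> \<in> space \<Omega>. channel \<sigma> (noise \<omega>) \<noteq> channel 0 (noise \<omega>)} \<le> flip_bound \<sigma>"
proof -
  define A where "A c = {\<omega> \<in> space \<Omega>. Q c (reim_comp (H *v \<sigma>) c + reim_comp (noise \<omega>) c) \<noteq> Q c (reim_comp (noise \<omega>) c)}" for c
  have "A c \<in> events" for c unfolding A_def by measurable
  then have events: "range A \<subseteq> events" by auto
  have "prob {\<omega> \<in> space \<Omega>. channel \<sigma> (noise \<omega>) \<noteq> channel 0 (noise \<omega>)} \<le> prob (\<Union>c. A c)"
    using events finite_UNIV_reim_components
    by (intro finite_measure_mono) (auto simp: A_def channel_def quantize_def reim_comp_add fun_eq_iff)
  also have "\<dots> \<le> (\<Sum>c\<in>UNIV. prob (A c))"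
    by (rule finite_measure_subadditive_finite[OF finite_UNIV_reim_components events])
  also have "\<dots> \<le> flip_bound \<sigma>"
    unfolding A_def flip_bound_def by (intro sum_mono prob_quantizer_flip_le)
  finally show ?thesis .
qed

definition received :: "'a \<Rightarrow> 'b \<times> reim \<Rightarrow> real" where
  "received \<omega> = channel (s \<omega>) (noise \<omega>)"

definition received_values :: "('b \<times> reim \<Rightarrow> real) set" where
  "received_values = received ` space \<Omega>"

definition input_law :: "(complex ^ 'u) measure" where
  "input_law = distr \<Omega> borel s"

definition trans_prob :: "('b \<times> reim \<Rightarrow> real) \<Rightarrow> complex ^ 'u \<Rightarrow> real" where
  "trans_prob x \<sigma> = prob {\<omega> \<in> space \<Omega>. channel \<sigma> (noise \<omega>) = x}"

definition received_prob :: "('b \<times> reim \<Rightarrow> real) \<Rightarrow> real" where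
  "received_prob x = prob {\<omega> \<in> space \<Omega>. received \<omega> = x}"

lemma received_eq_quantize_rx_signal: "quantize Q (rx_signal H J (s \<omega>) (w \<omega>) (n \<omega>)) = received \<omega>"
  unfolding received_def channel_def noise_def rx_signal_def by (simp add: add.assoc)

lemma sets_input_law[simp]: "sets input_law = sets borel"
  unfolding input_law_def by simp

lemma prob_space_input_law: "prob_space input_law"
  unfolding input_law_def by (rule prob_space_distr) simp

lemma channel_preimage_borel:
  "{p :: (complex ^ 'u) \<times> (complex ^ 'b). channel (fst p) (snd p) = x} \<in> sets borel"
proof -
  have "(\<lambda>p :: (complex ^ 'u) \<times> (complex ^ 'b). reim_comp (H *v fst p + snd p) c) \<in> borel_measurable borel" for c
    unfolding matrix_vector_mult_def by (intro borel_measurable_continuous_onI continuous_intros)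
  then have "(\<lambda>p :: (complex ^ 'u) \<times> (complex ^ 'b). Q c (reim_comp (H *v fst p + snd p) c)) \<in> borel_measurable borel" for c
    by measurable
  then have "(\<Inter>c. {p. Q c (reim_comp (H *v fst p + snd p) c) = x c}) \<in> sets borel"
    by (intro sets.finite_INT finite_UNIV_reim_components) (auto intro: measurable_sets_borel)
  moreover have "{p. channel (fst p) (snd p) = x} = (\<Inter>c. {p. Q c (reim_comp (H *v fst p + snd p) c) = x c})"
    unfolding channel_def quantize_def by (auto simp: fun_eq_iff)
  ultimately show ?thesis by simp
qed

lemma channel_borel: "{z. channel \<sigma> z = x} \<in> sets borel"
  using measurable_sets_borel[OF _ channel_preimage_borel, of "Pair \<sigma>"] by (simp add: vimage_def)

lemma received_event: "{\<omega> \<in> space \<Omega>. received \<omega> = x} \<in> events"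
  using measurable_sets[OF borel_measurable_Pair[OF s_measurable noise_measurable] channel_preimage_borel]
  by (simp add: received_def vimage_def Int_def conj_commute)

lemma channel_event: "{\<omega> \<in> space \<Omega>. channel \<sigma> (noise \<omega>) = x} \<in> events"
  using measurable_sets[OF noise_measurable channel_borel] by (simp add: vimage_def Int_def conj_commute)

lemma indep_s_noise: "indep_rv \<Omega> s noise"
proof -
  have "(\<lambda>p :: (complex ^ 'i) \<times> (complex ^ 'b). J *v fst p + snd p) \<in> borel_measurable borel"
    unfolding matrix_vector_mult_def by (intro borel_measurable_continuous_onI continuous_intros)
  from indep_rv_compose_right[OF indep_s_wn this] show ?thesis by (simp add: noise_def[abs_def])
qed

lemma trans_prob_emeasure: "emeasure (distr \<Omega> borel noise) {z. channel \<sigma> z = x} = ennreal (trans_prob x \<sigma>)"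
  unfolding trans_prob_def using channel_borel
  by (simp add: emeasure_distr emeasure_eq_measure vimage_def Int_def conj_commute)

lemma trans_prob_measurable[measurable]: "trans_prob x \<in> borel_measurable borel"
proof -
  interpret noise_law: prob_space "distr \<Omega> borel noise" by (rule prob_space_distr) simp
  have "sets (borel \<Otimes>\<^sub>M distr \<Omega> borel noise) = sets (borel :: ((complex ^ 'u) \<times> (complex ^ 'b)) measure)"
    by (simp add: borel_prod[symmetric] cong: sets_pair_measure_cong)
  then have "(\<lambda>\<sigma>. emeasure (distr \<Omega> borel noise) (Pair \<sigma> -` {p. channel (fst p) (snd p) = x}))
      \<in> borel_measurable borel"
    using channel_preimage_borel by (intro noise_law.measurable_emeasure_Pair) simp
  then have "(\<lambda>\<sigma>. enn2real (ennreal (trans_prob x \<sigma>))) \<in> borel_measurable borel"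
    by (simp add: vimage_def trans_prob_emeasure)
  then show ?thesis by (simp add: trans_prob_def[abs_def])
qed

lemma trans_prob_measurable_input_law[measurable]: "trans_prob x \<in> borel_measurable input_law"
  by (simp add: measurable_cong_sets[OF sets_input_law refl])

lemma emeasure_received_input:
  assumes "B \<in> sets borel"
  shows "emeasure \<Omega> {\<omega> \<in> space \<Omega>. received \<omega> = x \<and> s \<omega> \<in> B}
    = (\<integral>\<^sup>+\<sigma>. ennreal (trans_prob x \<sigma>) * indicator B \<sigma> \<partial>input_law)"
proof -
  define E where "E = {p :: (complex ^ 'u) \<times> (complex ^ 'b). fst p \<in> B \<and> channel (fst p) (snd p) = x}"
  have "fst -` B \<in> sets (borel :: ((complex ^ 'u) \<times> (complex ^ 'b)) measure)"
    using assms by (intro measurable_sets_borel[OF _ assms]) (intro borel_measurable_continuous_onI continuous_intros)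
  then have E: "E \<in> sets borel"
    using channel_preimage_borel[of x] unfolding E_def by (auto simp: vimage_def Collect_conj_eq)
  have "emeasure \<Omega> {\<omega> \<in> space \<Omega>. received \<omega> = x \<and> s \<omega> \<in> B} = emeasure \<Omega> {\<omega> \<in> space \<Omega>. (s \<omega>, noise \<omega>) \<in> E}"
    by (auto simp: E_def received_def conj_commute intro!: arg_cong[where f="emeasure \<Omega>"])
  also have "\<dots> = (\<integral>\<^sup>+\<sigma>. emeasure (distr \<Omega> borel noise) (Pair \<sigma> -` E) \<partial>input_law)"
    unfolding input_law_def by (rule emeasure_indep_pair[OF prob_space_\<Omega> indep_s_noise E])
  also have "\<dots> = (\<integral>\<^sup>+\<sigma>. ennreal (trans_prob x \<sigma>) * indicator B \<sigma> \<partial>input_law)"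
    by (intro nn_integral_cong) (auto simp: E_def vimage_def trans_prob_emeasure[symmetric] indicator_def)
  finally show ?thesis .
qed

lemma integrable_trans_prob: "integrable input_law (trans_prob x)"
proof -
  interpret input_law: prob_space input_law by (rule prob_space_input_law)
  show ?thesis by (intro input_law.integrable_const_bound[where B=1]) (auto simp: trans_prob_def)
qed

lemma nn_integral_trans_prob: "(\<integral>\<^sup>+\<sigma>. ennreal (trans_prob x \<sigma>) \<partial>input_law) = ennreal (received_prob x)"
  using emeasure_received_input[of UNIV x] by (simp add: received_prob_def emeasure_eq_measure)

lemma received_prob_eq_integral: "received_prob x = (\<integral>\<sigma>. trans_prob x \<sigma> \<partial>input_law)"
proof -
  have "ennreal (received_prob x) = ennreal (\<integral>\<sigma>. trans_prob x \<sigma> \<partial>input_law)"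
    unfolding nn_integral_trans_prob[symmetric]
    by (rule nn_integral_eq_integral[OF integrable_trans_prob]) (simp add: trans_prob_def)
  then show ?thesis by (simp add: received_prob_def trans_prob_def)
qed

lemma finite_received_values: "finite received_values"
  and card_received_values_le: "card received_values \<le> m ^ (2 * CARD('b))"
proof -
  let ?levels = "\<Pi>\<^sub>E c\<in>(UNIV :: ('b \<times> reim) set). range (Q c)"
  have subset: "received_values \<subseteq> ?levels"
    unfolding received_values_def received_def channel_def quantize_def by auto
  have finite_levels: "finite ?levels"
    using finite_UNIV_reim_components quantizer unfolding is_quantizer_def by (intro finite_PiE) auto
  then show "finite received_values" using subset by (rule finite_subset[rotated])
  have "card received_values \<le> card ?levels" using subset finite_levels by (rule card_mono[rotated])
  also have "\<dots> = m ^ (2 * CARD('b))"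
    using quantizer unfolding is_quantizer_def
    by (simp add: card_PiE[OF finite_UNIV_reim_components] UNIV_reim mult_2)
  finally show "card received_values \<le> m ^ (2 * CARD('b))" .
qed

lemma received_measurable: "received \<in> measurable \<Omega> (count_space received_values)"
  unfolding measurable_count_space_eq2[OF finite_received_values]
  using received_event by (auto simp: received_values_def vimage_def Int_def conj_commute)

definition received_law :: "('b \<times> reim \<Rightarrow> real) measure" where
  "received_law = distr \<Omega> (count_space received_values) received"

definition joint_law :: "(('b \<times> reim \<Rightarrow> real) \<times> (complex ^ 'u)) measure" where
  "joint_law = distr \<Omega> (count_space received_values \<Otimes>\<^sub>M borel) (\<lambda>\<omega>. (received \<omega>, s \<omega>))"

text \<open>Where \<open>received_prob x = 0\<close> this takes the junk value \<open>0\<close> of division by zero.\<close>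
definition info_density :: "('b \<times> reim \<Rightarrow> real) \<times> (complex ^ 'u) \<Rightarrow> real" where
  "info_density p = trans_prob (fst p) (snd p) / received_prob (fst p)"

lemma prob_space_received_law: "prob_space received_law"
  unfolding received_law_def by (rule prob_space_distr[OF received_measurable])

lemma emeasure_received_law: "x \<in> received_values \<Longrightarrow> emeasure received_law {x} = ennreal (received_prob x)"
  unfolding received_law_def received_prob_def
  by (subst emeasure_distr[OF received_measurable]) (auto simp: emeasure_eq_measure vimage_def Int_def conj_commute)

lemma sets_product_law: "sets (received_law \<Otimes>\<^sub>M input_law) = sets (count_space received_values \<Otimes>\<^sub>M borel)"
  unfolding received_law_def by (intro sets_pair_measure_cong) auto

lemma info_density_nonneg: "info_density p \<ge> 0"
  unfolding info_density_def trans_prob_def received_prob_def by simp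

lemma info_density_measurable: "info_density \<in> borel_measurable (received_law \<Otimes>\<^sub>M input_law)"
proof -
  have "info_density \<in> borel_measurable (count_space received_values \<Otimes>\<^sub>M borel)"
    using finite_received_values
    by (intro measurable_pair_measure_countable1) (auto simp: info_density_def intro: countable_finite)
  then show ?thesis by (simp add: measurable_cong_sets[OF sets_product_law refl])
qed

lemma emeasure_joint_law_rectangle:
  assumes "A \<subseteq> received_values" "B \<in> sets borel"
  shows "emeasure joint_law (A \<times> B) = (\<Sum>x\<in>A. \<integral>\<^sup>+\<sigma>. ennreal (trans_prob x \<sigma>) * indicator B \<sigma> \<partial>input_law)"
proof -
  have finite_A: "finite A" using assms(1) finite_received_values by (rule finite_subset)
  have "{\<omega> \<in> space \<Omega>. received \<omega> = x \<and> s \<omega> \<in> B} = {\<omega> \<in> space \<Omega>. received \<omega> = x} \<inter> (s -` B \<inter> space \<Omega>)" for x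
    by auto
  then have events: "{\<omega> \<in> space \<Omega>. received \<omega> = x \<and> s \<omega> \<in> B} \<in> events" for x
    using received_event measurable_sets[OF s_measurable assms(2)] by auto
  have pair_measurable: "(\<lambda>\<omega>. (received \<omega>, s \<omega>)) \<in> measurable \<Omega> (count_space received_values \<Otimes>\<^sub>M borel)"
    by (rule measurable_Pair[OF received_measurable s_measurable])
  have "A \<times> B \<in> sets (count_space received_values \<Otimes>\<^sub>M borel)"
    using assms by (intro pair_measureI) auto
  then have "emeasure joint_law (A \<times> B) = emeasure \<Omega> ((\<lambda>\<omega>. (received \<omega>, s \<omega>)) -` (A \<times> B) \<inter> space \<Omega>)"
    unfolding joint_law_def by (rule emeasure_distr[OF pair_measurable])
  also have "(\<lambda>\<omega>. (received \<omega>, s \<omega>)) -` (A \<times> B) \<inter> space \<Omega> = (\<Union>x\<in>A. {\<omega> \<in> space \<Omega>. received \<omega> = x \<and> s \<omega> \<in> B})"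
    by auto
  also have "emeasure \<Omega> \<dots> = (\<Sum>x\<in>A. emeasure \<Omega> {\<omega> \<in> space \<Omega>. received \<omega> = x \<and> s \<omega> \<in> B})"
    using events by (intro sum_emeasure[symmetric] finite_A) (auto simp: disjoint_family_on_def)
  also have "\<dots> = (\<Sum>x\<in>A. \<integral>\<^sup>+\<sigma>. ennreal (trans_prob x \<sigma>) * indicator B \<sigma> \<partial>input_law)"
    using assms(2) by (intro sum.cong refl emeasure_received_input)
  finally show ?thesis .
qed

lemma nn_integral_info_density:
  assumes "x \<in> received_values" "B \<in> sets borel"
  shows "(\<integral>\<^sup>+\<sigma>. ennreal (info_density (x, \<sigma>)) * indicator B \<sigma> \<partial>input_law) * emeasure received_law {x}
    = (\<integral>\<^sup>+\<sigma>. ennreal (trans_prob x \<sigma>) * indicator B \<sigma> \<partial>input_law)"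
proof (cases "received_prob x = 0")
  case True
  have "(\<integral>\<^sup>+\<sigma>. ennreal (trans_prob x \<sigma>) * indicator B \<sigma> \<partial>input_law) \<le> (\<integral>\<^sup>+\<sigma>. ennreal (trans_prob x \<sigma>) \<partial>input_law)"
    by (intro nn_integral_mono) (auto simp: indicator_def)
  then show ?thesis using True nn_integral_trans_prob[of x] emeasure_received_law[OF assms(1)] by simp
next
  case False
  then have "received_prob x > 0" by (simp add: received_prob_def less_le)
  then have "ennreal (info_density (x, \<sigma>)) * indicator B \<sigma> * ennreal (received_prob x)
      = ennreal (trans_prob x \<sigma>) * indicator B \<sigma>" for \<sigma>
    by (auto simp: info_density_def trans_prob_def indicator_def simp flip: ennreal_mult)
  then show ?thesis
    unfolding emeasure_received_law[OF assms(1)] using assms(2)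
    by (subst nn_integral_multc[symmetric]) (auto simp: info_density_def measurable_cong_sets[OF sets_input_law refl])
qed

lemma joint_law_eq_density: "joint_law = density (received_law \<Otimes>\<^sub>M input_law) info_density"
proof (rule measure_eqI_pair_rectangles[of _ received_law input_law])
  interpret received_law: prob_space received_law by (rule prob_space_received_law)
  interpret input_law: prob_space input_law by (rule prob_space_input_law)
  interpret pair_sigma_finite received_law input_law ..
  have density_measurable: "(\<lambda>p. ennreal (info_density p)) \<in> borel_measurable (received_law \<Otimes>\<^sub>M input_law)"
    using info_density_measurable by measurable
  show "sets joint_law = sets (received_law \<Otimes>\<^sub>M input_law)"
    unfolding joint_law_def sets_product_law by simp
  show "sets (density (received_law \<Otimes>\<^sub>M input_law) info_density) = sets (received_law \<Otimes>\<^sub>M input_law)"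
    by simp
  interpret joint: prob_space joint_law
    unfolding joint_law_def by (intro prob_space_distr measurable_Pair received_measurable) simp
  show "emeasure joint_law (space received_law \<times> space input_law) \<noteq> \<infinity>"
    by (simp add: joint.emeasure_eq_measure)
  fix A B assume A: "A \<in> sets received_law" and B: "B \<in> sets input_law"
  then have A': "A \<subseteq> received_values" "finite A" and B': "B \<in> sets borel"
    using finite_received_values finite_subset unfolding received_law_def by auto
  have AB: "A \<times> B \<in> sets (received_law \<Otimes>\<^sub>M input_law)" using A B by (rule pair_measureI)
  have "emeasure (density (received_law \<Otimes>\<^sub>M input_law) info_density) (A \<times> B)
      = (\<integral>\<^sup>+p. ennreal (info_density p) * indicator (A \<times> B) p \<partial>received_law \<Otimes>\<^sub>M input_law)"
    by (rule emeasure_density[OF density_measurable AB])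
  also have "\<dots> = (\<integral>\<^sup>+x. \<integral>\<^sup>+\<sigma>. ennreal (info_density (x, \<sigma>)) * indicator (A \<times> B) (x, \<sigma>) \<partial>input_law \<partial>received_law)"
    using AB by (intro input_law.nn_integral_fst[symmetric] borel_measurable_times_ennreal
        density_measurable borel_measurable_indicator) simp
  also have "\<dots> = (\<integral>\<^sup>+x. (\<integral>\<^sup>+\<sigma>. ennreal (info_density (x, \<sigma>)) * indicator B \<sigma> \<partial>input_law) * indicator A x \<partial>received_law)"
    by (intro nn_integral_cong) (auto simp: indicator_def)
  also have "\<dots> = (\<Sum>x\<in>A. (\<integral>\<^sup>+\<sigma>. ennreal (info_density (x, \<sigma>)) * indicator B \<sigma> \<partial>input_law) * emeasure received_law {x})"
    by (rule nn_integral_indicator_finite[OF A'(2)]) (use A'(1) in \<open>auto simp: received_law_def\<close>)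
  also have "\<dots> = (\<Sum>x\<in>A. \<integral>\<^sup>+\<sigma>. ennreal (trans_prob x \<sigma>) * indicator B \<sigma> \<partial>input_law)"
    using A' B' by (intro sum.cong refl nn_integral_info_density) auto
  also have "\<dots> = emeasure joint_law (A \<times> B)"
    by (rule emeasure_joint_law_rectangle[OF A'(1) B', symmetric])
  finally show "emeasure joint_law (A \<times> B) = emeasure (density (received_law \<Otimes>\<^sub>M input_law) info_density) (A \<times> B)"
    by (rule sym)
qed

lemma info_density_le:
  assumes "x \<in> received_values"
  shows "info_density (x, \<sigma>) \<le> (\<Sum>y\<in>received_values. 1 / received_prob y)"
proof -
  have "info_density (x, \<sigma>) \<le> 1 / received_prob x"
    unfolding info_density_def trans_prob_def received_prob_def by (simp add: divide_right_mono)
  also have "\<dots> \<le> (\<Sum>y\<in>received_values. 1 / received_prob y)"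
    using assms finite_received_values by (intro member_le_sum) (auto simp: received_prob_def)
  finally show ?thesis .
qed

lemma integrable_info_density_log:
  "integrable (received_law \<Otimes>\<^sub>M input_law) (\<lambda>p. info_density p * log 2 (info_density p))"
proof -
  interpret received_law: prob_space received_law by (rule prob_space_received_law)
  interpret input_law: prob_space input_law by (rule prob_space_input_law)
  interpret product: pair_prob_space received_law input_law ..
  define G where "G = (\<Sum>y\<in>received_values. 1 / received_prob y)"
  show ?thesis
  proof (rule product.P.integrable_const_bound[where B="(G\<^sup>2 + 1) / ln 2"])
    show "AE p in received_law \<Otimes>\<^sub>M input_law. norm (info_density p * log 2 (info_density p)) \<le> (G\<^sup>2 + 1) / ln 2"
    proof (rule AE_I2)
      fix p assume "p \<in> space (received_law \<Otimes>\<^sub>M input_law)"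
      then have "fst p \<in> received_values" by (auto simp: received_law_def space_pair_measure)
      then have "info_density p \<le> G" using info_density_le[of "fst p" "snd p"] by (simp add: G_def)
      then have "(info_density p)\<^sup>2 + 1 \<le> G\<^sup>2 + 1" using info_density_nonneg[of p] by (simp add: power_mono)
      with abs_xlnx_le[OF info_density_nonneg[of p]]
      show "norm (info_density p * log 2 (info_density p)) \<le> (G\<^sup>2 + 1) / ln 2"
        by (simp add: log_def abs_mult divide_right_mono)
    qed
  qed (use info_density_measurable in measurable)
qed

lemma mutual_information_eq_sum:
  "mutual_information 2 (count_space received_values) borel received s
    = (\<Sum>x\<in>received_values. received_prob x * (\<integral>\<sigma>. info_density (x, \<sigma>) * log 2 (info_density (x, \<sigma>)) \<partial>input_law))"
proof -
  interpret received_law: prob_space received_law by (rule prob_space_received_law)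
  interpret input_law: prob_space input_law by (rule prob_space_input_law)
  interpret product: pair_prob_space received_law input_law ..
  have "mutual_information 2 (count_space received_values) borel received s
      = KL_divergence 2 (received_law \<Otimes>\<^sub>M input_law) joint_law"
    unfolding mutual_information_def received_law_def input_law_def joint_law_def ..
  also have "\<dots> = (\<integral>p. info_density p * log 2 (info_density p) \<partial>received_law \<Otimes>\<^sub>M input_law)"
    unfolding joint_law_eq_density
    by (rule product.KL_density) (auto simp: info_density_measurable info_density_nonneg)
  also have "\<dots> = (\<integral>x. (\<integral>\<sigma>. info_density (x, \<sigma>) * log 2 (info_density (x, \<sigma>)) \<partial>input_law) \<partial>received_law)"
    by (rule product.integral_fst'[symmetric]) (rule integrable_info_density_log)
  also have "\<dots> = (\<integral>x. (\<integral>\<sigma>. info_density (x, \<sigma>) * log 2 (info_density (x, \<sigma>)) \<partial>input_law)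
      * indicator received_values x \<partial>received_law)"
    by (rule Bochner_Integration.integral_cong) (auto simp: received_law_def indicator_def)
  also have "\<dots> = (\<Sum>x\<in>received_values. (\<integral>\<sigma>. info_density (x, \<sigma>) * log 2 (info_density (x, \<sigma>)) \<partial>input_law)
      * measure received_law {x})"
    by (rule integral_indicator_finite_real[OF finite_received_values])
      (auto simp: received_law_def emeasure_received_law[unfolded received_law_def])
  also have "\<dots> = (\<Sum>x\<in>received_values. received_prob x
      * (\<integral>\<sigma>. info_density (x, \<sigma>) * log 2 (info_density (x, \<sigma>)) \<partial>input_law))"
    by (intro sum.cong refl) (simp add: measure_def emeasure_received_law received_prob_def)
  finally show ?thesis .
qed

lemma received_term_le:
  assumes "0 < \<tau>" "\<tau> \<le> 1"
  shows "received_prob x * (\<integral>\<sigma>. info_density (x, \<sigma>) * log 2 (info_density (x, \<sigma>)) \<partial>input_law)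
    \<le> (\<tau> - ln \<tau> * (\<integral>\<sigma>. \<bar>trans_prob x \<sigma> - received_prob x\<bar> \<partial>input_law)) / ln 2"
proof (cases "received_prob x = 0")
  case True
  have "0 \<le> - ln \<tau> * (\<integral>\<sigma>. \<bar>trans_prob x \<sigma> - received_prob x\<bar> \<partial>input_law)"
    using assms by (intro mult_nonneg_nonneg) auto
  then show ?thesis using True assms by simp
next
  case False
  interpret input_law: prob_space input_law by (rule prob_space_input_law)
  define p where "p = received_prob x"
  have "p \<ge> 0" unfolding p_def received_prob_def by simp
  then have p: "p > 0" "p = (\<integral>\<sigma>. trans_prob x \<sigma> \<partial>input_law)"
    using False received_prob_eq_integral[of x] unfolding p_def by auto
  have "p * (\<integral>\<sigma>. info_density (x, \<sigma>) * log 2 (info_density (x, \<sigma>)) \<partial>input_law)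
      = (\<integral>\<sigma>. trans_prob x \<sigma> * ln (trans_prob x \<sigma> / p) \<partial>input_law) / ln 2"
    using p(1) by (simp add: info_density_def p_def[symmetric] log_def)
  also have "\<dots> \<le> (\<tau> - ln \<tau> * (\<integral>\<sigma>. \<bar>trans_prob x \<sigma> - p\<bar> \<partial>input_law)) / ln 2"
    using input_law.integral_xlnx_ratio_le[of "trans_prob x" \<tau>] p assms
    by (intro divide_right_mono) (auto simp: trans_prob_def)
  finally show ?thesis unfolding p_def .
qed

lemma integrable_input_component: "integrable input_law (\<lambda>\<sigma>. cmod (\<sigma> $ u))"
  and integral_input_component_le: "(\<integral>\<sigma>. cmod (\<sigma> $ u) \<partial>input_law) \<le> 1"
proof -
  interpret input_law: prob_space input_law by (rule prob_space_input_law)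
  have [measurable]: "(\<lambda>\<sigma>::complex ^ 'u. cmod (\<sigma> $ u)) \<in> borel_measurable borel"
    by (intro borel_measurable_continuous_onI continuous_intros)
  have "integrable input_law (\<lambda>\<sigma>. (cmod (\<sigma> $ u))\<^sup>2)"
    unfolding input_law_def by (subst integrable_distr_eq) (auto simp: s_power_integrable)
  moreover have "(\<integral>\<sigma>. (cmod (\<sigma> $ u))\<^sup>2 \<partial>input_law) \<le> 1"
    unfolding input_law_def by (subst integral_distr) (auto simp: s_power)
  ultimately show "integrable input_law (\<lambda>\<sigma>. cmod (\<sigma> $ u))" "(\<integral>\<sigma>. cmod (\<sigma> $ u) \<partial>input_law) \<le> 1"
    using input_law.integral_abs_le_one_of_square[of "\<lambda>\<sigma>. cmod (\<sigma> $ u)"]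
    by (simp_all add: measurable_cong_sets[OF sets_input_law refl])
qed

lemma abs_reim_comp_H_le: "\<bar>reim_comp (H *v \<sigma>) c\<bar> \<le> (\<Sum>u\<in>UNIV. cmod (H $ fst c $ u) * cmod (\<sigma> $ u))"
proof -
  have "\<bar>reim_comp (H *v \<sigma>) c\<bar> \<le> cmod (\<Sum>u\<in>UNIV. H $ fst c $ u * \<sigma> $ u)"
    using abs_reim_comp_le[of "H *v \<sigma>" c] by (simp add: matrix_vector_mult_def)
  also have "\<dots> \<le> (\<Sum>u\<in>UNIV. cmod (H $ fst c $ u * \<sigma> $ u))" by (rule norm_sum)
  finally show ?thesis by (simp add: norm_mult)
qed

lemma integrable_abs_reim_comp_H: "integrable input_law (\<lambda>\<sigma>. \<bar>reim_comp (H *v \<sigma>) c\<bar>)"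
proof (rule Bochner_Integration.integrable_bound)
  show "integrable input_law (\<lambda>\<sigma>. \<Sum>u\<in>UNIV. cmod (H $ fst c $ u) * cmod (\<sigma> $ u))"
    using integrable_input_component by (intro Bochner_Integration.integrable_sum integrable_mult_right) auto
  show "AE \<sigma> in input_law. norm \<bar>reim_comp (H *v \<sigma>) c\<bar> \<le> norm (\<Sum>u\<in>UNIV. cmod (H $ fst c $ u) * cmod (\<sigma> $ u))"
    using abs_reim_comp_H_le by (intro AE_I2) (simp add: sum_nonneg order.trans[OF _ abs_ge_self])
qed (simp add: measurable_cong_sets[OF sets_input_law refl])

lemma integrable_flip_bound: "integrable input_law flip_bound"
  unfolding flip_bound_def using integrable_abs_reim_comp_H
  by (intro Bochner_Integration.integrable_sum integrable_mult_right integrable_divide) auto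

lemma integral_flip_bound_le: "(\<integral>\<sigma>. flip_bound \<sigma> \<partial>input_law) \<le> real m * flip_constant H J / sqrt \<rho>"
proof -
  have integral_le: "(\<integral>\<sigma>. \<bar>reim_comp (H *v \<sigma>) c\<bar> \<partial>input_law) \<le> (\<Sum>u\<in>UNIV. cmod (H $ fst c $ u))" for c
  proof -
    have "(\<integral>\<sigma>. \<bar>reim_comp (H *v \<sigma>) c\<bar> \<partial>input_law) \<le> (\<integral>\<sigma>. (\<Sum>u\<in>UNIV. cmod (H $ fst c $ u) * cmod (\<sigma> $ u)) \<partial>input_law)"
      using integrable_input_component by (intro integral_mono integrable_abs_reim_comp_H abs_reim_comp_H_le
          Bochner_Integration.integrable_sum integrable_mult_right) auto
    also have "\<dots> = (\<Sum>u\<in>UNIV. cmod (H $ fst c $ u) * (\<integral>\<sigma>. cmod (\<sigma> $ u) \<partial>input_law))"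
      using integrable_input_component by (subst Bochner_Integration.integral_sum) auto
    also have "\<dots> \<le> (\<Sum>u\<in>UNIV. cmod (H $ fst c $ u) * 1)"
      using integral_input_component_le by (intro sum_mono mult_left_mono) auto
    finally show ?thesis by simp
  qed
  have "(\<integral>\<sigma>. flip_bound \<sigma> \<partial>input_law)
      = (\<Sum>c\<in>UNIV. real m * (44 * (\<integral>\<sigma>. \<bar>reim_comp (H *v \<sigma>) c\<bar> \<partial>input_law) / (norm (J $ fst c) * sqrt \<rho>)))"
    unfolding flip_bound_def using integrable_abs_reim_comp_H
    by (subst Bochner_Integration.integral_sum) (auto intro!: integrable_mult_right integrable_divide)
  also have "\<dots> \<le> (\<Sum>c\<in>(UNIV :: ('b \<times> reim) set).
      real m * (44 * (\<Sum>u\<in>UNIV. cmod (H $ fst c $ u)) / (norm (J $ fst c) * sqrt \<rho>)))"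
    using integral_le \<rho>_pos by (intro sum_mono mult_left_mono divide_right_mono) auto
  also have "\<dots> = real m * flip_constant H J / sqrt \<rho>"
    unfolding flip_constant_def by (simp add: sum_distrib_left sum_divide_distrib field_simps)
  finally show ?thesis .
qed

lemma sum_abs_trans_prob_diff_le: "(\<Sum>x\<in>received_values. \<bar>trans_prob x \<sigma> - trans_prob x 0\<bar>) \<le> 2 * flip_bound \<sigma>"
proof -
  have "(\<Sum>x\<in>received_values. \<bar>trans_prob x \<sigma> - trans_prob x 0\<bar>)
      \<le> 2 * prob {\<omega> \<in> space \<Omega>. channel \<sigma> (noise \<omega>) \<noteq> channel 0 (noise \<omega>)}"
    unfolding trans_prob_def
    by (rule sum_abs_prob_eq_diff_le[OF finite_received_values channel_event channel_event channel_flip_event])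
  also have "\<dots> \<le> 2 * flip_bound \<sigma>" using prob_channel_flip_le by simp
  finally show ?thesis .
qed

lemma sum_integral_deviation_le:
  "(\<Sum>x\<in>received_values. \<integral>\<sigma>. \<bar>trans_prob x \<sigma> - received_prob x\<bar> \<partial>input_law)
    \<le> 4 * (real m * flip_constant H J / sqrt \<rho>)"
proof -
  interpret input_law: prob_space input_law by (rule prob_space_input_law)
  have integrable: "integrable input_law (\<lambda>\<sigma>. \<bar>trans_prob x \<sigma> - trans_prob x 0\<bar>)" for x
    using integrable_trans_prob[of x] by simp
  have "(\<Sum>x\<in>received_values. \<integral>\<sigma>. \<bar>trans_prob x \<sigma> - received_prob x\<bar> \<partial>input_law)
      \<le> (\<Sum>x\<in>received_values. 2 * (\<integral>\<sigma>. \<bar>trans_prob x \<sigma> - trans_prob x 0\<bar> \<partial>input_law))"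
    unfolding received_prob_eq_integral
    by (intro sum_mono input_law.integral_abs_diff_mean_le integrable_trans_prob)
  also have "\<dots> = 2 * (\<integral>\<sigma>. (\<Sum>x\<in>received_values. \<bar>trans_prob x \<sigma> - trans_prob x 0\<bar>) \<partial>input_law)"
    using integrable by (simp add: Bochner_Integration.integral_sum sum_distrib_left)
  also have "\<dots> \<le> 2 * (\<integral>\<sigma>. 2 * flip_bound \<sigma> \<partial>input_law)"
    using integrable integrable_flip_bound
    by (intro mult_left_mono integral_mono sum_abs_trans_prob_diff_le Bochner_Integration.integrable_sum) auto
  also have "\<dots> \<le> 4 * (real m * flip_constant H J / sqrt \<rho>)"
    using integral_flip_bound_le by simp
  finally show ?thesis .
qed

lemma mutual_information_le:
  assumes "0 < \<tau>" "\<tau> \<le> 1"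
  shows "mutual_information 2 (count_space received_values) borel received s
    \<le> (real m ^ (2 * CARD('b)) * \<tau> + (- ln \<tau>) * (4 * (real m * flip_constant H J / sqrt \<rho>))) / ln 2"
proof -
  have "mutual_information 2 (count_space received_values) borel received s
      \<le> (\<Sum>x\<in>received_values. (\<tau> - ln \<tau> * (\<integral>\<sigma>. \<bar>trans_prob x \<sigma> - received_prob x\<bar> \<partial>input_law)) / ln 2)"
    unfolding mutual_information_eq_sum by (intro sum_mono received_term_le assms)
  also have "\<dots> = (real (card received_values) * \<tau>
      + (- ln \<tau>) * (\<Sum>x\<in>received_values. \<integral>\<sigma>. \<bar>trans_prob x \<sigma> - received_prob x\<bar> \<partial>input_law)) / ln 2"
    by (simp add: sum_divide_distrib[symmetric] sum_subtractf sum_distrib_left sum_negf)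
  also have "\<dots> \<le> (real m ^ (2 * CARD('b)) * \<tau> + (- ln \<tau>) * (4 * (real m * flip_constant H J / sqrt \<rho>))) / ln 2"
    using assms card_received_values_le sum_integral_deviation_le
    by (intro divide_right_mono add_mono mult_right_mono mult_left_mono) (auto simp flip: of_nat_power)
  finally show ?thesis .
qed

lemma mutual_information_rx_signal_le:
  assumes "\<rho> \<ge> 1"
  shows "mutual_information 2 (count_space ((\<lambda>\<omega>. quantize Q (rx_signal H J (s \<omega>) (w \<omega>) (n \<omega>))) ` space \<Omega>))
      borel (\<lambda>\<omega>. quantize Q (rx_signal H J (s \<omega>) (w \<omega>) (n \<omega>))) s
    \<le> (real m ^ (2 * CARD('b)) * \<rho> powr (- real CARD('b))
      + real CARD('b) * ln \<rho> * (4 * flip_constant H J * real m / sqrt \<rho>)) / ln 2"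
proof -
  have "\<rho> powr (- real CARD('b)) \<le> 1"
    using assms by (auto simp: powr_le_one_le ge_one_powr_ge_zero powr_minus_divide)
  from mutual_information_le[OF _ this] assms
  show ?thesis unfolding received_eq_quantize_rx_signal received_values_def
    by (simp add: ln_powr algebra_simps)
qed

end

theorem proposition2:
  fixes H :: "complex ^ 'u ^ 'b" and J :: "complex ^ 'i ^ 'b" and N0 :: real
    and P :: "real \<Rightarrow> 'a measure"
    and s :: "real \<Rightarrow> 'a \<Rightarrow> complex ^ 'u"
    and w :: "real \<Rightarrow> 'a \<Rightarrow> complex ^ 'i"
    and n :: "real \<Rightarrow> 'a \<Rightarrow> complex ^ 'b"
    and Q :: "real \<Rightarrow> 'b \<times> reim \<Rightarrow> real \<Rightarrow> real"
    and M :: "real \<Rightarrow> nat"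
  assumes N0_pos: "N0 > 0"
    and prob: "\<And>\<rho>. \<rho> > 0 \<Longrightarrow> prob_space (P \<rho>)"
    and s_meas: "\<And>\<rho>. \<rho> > 0 \<Longrightarrow> s \<rho> \<in> borel_measurable (P \<rho>)"
    and w_gauss: "\<And>\<rho>. \<rho> > 0 \<Longrightarrow> distributed (P \<rho>) lborel (w \<rho>) (\<lambda>x. ennreal (cn_density \<rho> x))"
    and n_gauss: "\<And>\<rho>. \<rho> > 0 \<Longrightarrow> distributed (P \<rho>) lborel (n \<rho>) (\<lambda>x. ennreal (cn_density N0 x))"
    and indep_wn: "\<And>\<rho>. \<rho> > 0 \<Longrightarrow> indep_rv (P \<rho>) (w \<rho>) (n \<rho>)"
    and indep_s: "\<And>\<rho>. \<rho> > 0 \<Longrightarrow>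
       indep_rv (P \<rho>) (s \<rho>) (\<lambda>\<omega>. (w \<rho> \<omega>, n \<rho> \<omega>))"
    and s_power_int: "\<And>\<rho> u. \<rho> > 0 \<Longrightarrow> integrable (P \<rho>) (\<lambda>\<omega>. (cmod (s \<rho> \<omega> $ u))\<^sup>2)"
    and s_power: "\<And>\<rho> u. \<rho> > 0 \<Longrightarrow> (\<integral>\<omega>. (cmod (s \<rho> \<omega> $ u))\<^sup>2 \<partial>P \<rho>) \<le> 1"
    and s_uncorr: "\<And>\<rho> u v. \<rho> > 0 \<Longrightarrow> u \<noteq> v \<Longrightarrow>
       (\<integral>\<omega>. s \<rho> \<omega> $ u * cnj (s \<rho> \<omega> $ v) \<partial>P \<rho>) = 0"
    and M_ge2: "\<And>\<rho>. \<rho> > 0 \<Longrightarrow> M \<rho> \<ge> 2"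
    and quant: "\<And>\<rho> c. \<rho> > 0 \<Longrightarrow> is_quantizer (Q \<rho> c) (M \<rho>)"
    and J_rows: "\<And>b. J $ b \<noteq> 0"
    and MI_lim: "\<exists>L :: ereal. L > 0 \<and>
       ((\<lambda>\<rho>. ereal (prob_space.mutual_information (P \<rho>) 2
          (count_space ((\<lambda>\<omega>. quantize (Q \<rho>) (rx_signal H J (s \<rho> \<omega>) (w \<rho> \<omega>) (n \<rho> \<omega>)))
                         ` space (P \<rho>)))
          borel
          (\<lambda>\<omega>. quantize (Q \<rho>) (rx_signal H J (s \<rho> \<omega>) (w \<rho> \<omega>) (n \<rho> \<omega>)))
          (s \<rho>))) \<longlongrightarrow> L) at_top"
  shows "\<not> (\<exists>\<epsilon>>0. ((\<lambda>\<rho>. real (M \<rho>) * \<rho> powr (\<epsilon> - 1/2)) \<longlongrightarrow> 0) at_top)"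
proof
  assume "\<exists>\<epsilon>>0. ((\<lambda>\<rho>. real (M \<rho>) * \<rho> powr (\<epsilon> - 1/2)) \<longlongrightarrow> 0) at_top"
  then obtain \<epsilon> where "\<epsilon> > 0" and M_rate: "((\<lambda>\<rho>. real (M \<rho>) * \<rho> powr (\<epsilon> - 1/2)) \<longlongrightarrow> 0) at_top"
    by blast
  define k where "k = CARD('b)"
  define C where "C = 4 * flip_constant H J"
  \<comment> \<open>\<open>H\<close> occurs in no locale assumption, hence it is not an argument of the locale predicate.\<close>
  have channel: "jammed_quantized_channel J \<rho> (P \<rho>) (s \<rho>) (w \<rho>) (n \<rho>) (Q \<rho>) (M \<rho>)" if "\<rho> > 0" for \<rho>
    using that by (intro jammed_quantized_channel.intro)
      (simp_all add: prob s_meas w_gauss indep_wn indep_s s_power_int s_power quant J_rows)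
  have "((\<lambda>\<rho>. real (M \<rho>) ^ (2 * k) * \<rho> powr (- real k) + real k * ln \<rho> * (C * real (M \<rho>) / sqrt \<rho>))
      \<longlongrightarrow> 0) at_top"
    by (rule info_bound_tendsto_zero[OF \<open>\<epsilon> > 0\<close> _ _ _ M_rate]) (simp_all add: k_def C_def flip_constant_nonneg)
  then have "((\<lambda>\<rho>. (real (M \<rho>) ^ (2 * k) * \<rho> powr (- real k) + real k * ln \<rho> * (C * real (M \<rho>) / sqrt \<rho>))
      / ln 2) \<longlongrightarrow> 0) at_top"
    by (rule tendsto_divide_zero)
  then show False
    by (rule no_positive_limit_if_dominated[OF MI_lim _, where a=1])
      (unfold k_def C_def, rule jammed_quantized_channel.mutual_information_rx_signal_le[OF channel], simp_all)
qed

end
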